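(* In the setting below (Algorithm 2), (i) for every agent $i$ and every strategy $f_i$, $\mathbb E[L_i(\mathrm{id},\dots,\mathrm{id})]\le\mathbb E[L_i(f_i,(\mathrm{id})_{j\ne i})]$; (ii) if there is a feature $k\in[K]$ for which $\Pi$ is not degenerate, then, when all agents are truthful, for every agent $i$, fixed sample sizes $(n_j)_{j\neq i}$ and all $n_i<n_i'$, agent $i$'s expected loss when holding and truthfully submitting $n_i'$ points is strictly smaller than when holding $n_i$ points.
   Context: Setting (Algorithm 2). Fix $m\ge2$ agents and a measurable data space $\mathcal X$. A prior $\Pi$ is a probability distribution on the set of probability distributions on $\mathcal X$. $D\sim\Pi$ is drawn; conditionally on $D$, agent $i$ holds $X_i=(X_{i,1},\dots,X_{i,n_i})$ with entries i.i.d. from $D$, independent across agents (regard $X_{i,1},X_{i,2},\dots$ as an infinite conditionally i.i.d. sequence). A strategy is a measurable map $f:\bigcup_{\ell\ge0}\mathcal X^\ell\to\bigcup_{\ell\ge0}\mathcal X^\ell$; agent $i$ submits $X_i'=f_i(X_i)$; $\mathrm{id}$ is the identity (truthful) strategy. Feature maps $\varphi_1,\dots,\varphi_K:\mathcal X\to\mathbb R$ are measurable. For a finite nonempty multiset $S\subset\mathbb R$, $F_S(t)=\frac1{|S|}\sum_{s\in S}\mathbf 1\{s\le t\}$, and $\varphi_k(S')=\{\varphi_k(x):x\in S'\}$ for $S'\subset\mathcal X$. For $k\in[K]$, $j\ge0$, $r\ge1$ let $h^{(k)}_{j,r}:\mathcal X^j\times\mathbb R\to[0,1]$ be measurable such that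 whenever $D\sim\Pi$ and, conditionally on $D$, $Y_1,\dots,Y_j,T,Z_1,\dots,Z_r$ are i.i.d. from $D$, $h^{(k)}_{j,r}(Y_1,\dots,Y_j,\varphi_k(T))=\mathbb E[F_{\varphi_k(\{Z_1,\dots,Z_r\})}(\varphi_k(T))\mid Y_1,\dots,Y_j,\varphi_k(T)]$ a.s. Mechanism: for each $i$, $X'_{-i}=\bigcup_{j\neq i}X'_j$ (multiset, at least 2 elements), $T_i$ uniformly random from $X'_{-i}$, $Z_i=X'_{-i}\setminus\{T_i\}$, and $L_i=\frac1K\sum_{k=1}^K\big(h^{(k)}_{|X_i'|,|Z_i|}(X_i',\varphi_k(T_i))-F_{\varphi_k(Z_i)}(\varphi_k(T_i))\big)^2$. $L_i(f_1,\dots,f_m)$ is the loss under strategies $f_j$. Expectations are over $D\sim\Pi$, data, and all randomness. Degenerate for feature $k$: with $D\sim\Pi$ and, conditionally on $D$, $X_1,X_2,\dots,T,Z$ i.i.d. from $D$, $\Pi$ is degenerate for feature $k$ if for some $n\in\mathbb N$, $P(\varphi_k(Z)\le\varphi_k(T)\mid\varphi_k(T),X_1,\dots,X_n)=P(\varphi_k(Z)\le\varphi_k(T)\mid\varphi_k(T),X_1,\dots,X_{n+1})$ almost surely. *)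

theory Defs
  imports "HOL-Probability.Probability"
begin

text \<open>The measurable space of finite sequences (disjoint union over lengths l of the
  product spaces M^l), represented by lists.\<close>
definition listM :: "'a measure \<Rightarrow> 'a list measure" where
  "listM M = sigma (lists (space M))
     (\<Union>n. {{xs \<in> lists (space M). length xs = n \<and> (\<lambda>i\<in>{..<n}. xs ! i) \<in> A} | A.
            A \<in> sets (PiM {..<n} (\<lambda>_. M))})"

definition ecdf :: "real list \<Rightarrow> real \<Rightarrow> real" where
  "ecdf S t = real (length (filter (\<lambda>s. s \<le> t) S)) / real (length S)"

definition remove_nth :: "nat \<Rightarrow> 'a list \<Rightarrow> 'a list" where
  "remove_nth p ys = take p ys @ drop (Suc p) ys"

text \<open>Loss of an agent submitting xs when the others' pooled submissions are ys,
  averaged over the uniformly random choice of T among the entries of ys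
  (T = ys!p, Z = ys with position p removed).\<close>
definition mech_loss ::
  "nat \<Rightarrow> (nat \<Rightarrow> 'a \<Rightarrow> real) \<Rightarrow> (nat \<Rightarrow> nat \<Rightarrow> nat \<Rightarrow> 'a list \<Rightarrow> real \<Rightarrow> real)
     \<Rightarrow> 'a list \<Rightarrow> 'a list \<Rightarrow> real" where
  "mech_loss K \<phi> h xs ys =
     (1 / real (length ys)) * (\<Sum>p<length ys.
        (1 / real K) * (\<Sum>k<K.
          (h k (length xs) (length ys - 1) xs (\<phi> k (ys ! p))
           - ecdf (map (\<phi> k) (remove_nth p ys)) (\<phi> k (ys ! p)))\<^sup>2))"

text \<open>D ~ Prior, then conditionally on D the coordinates (j,l), j < m, l < n j, are i.i.d. from D;
  coordinate (j,l) is the l-th data point of agent j.\<close>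
definition data_measure :: "'a measure measure \<Rightarrow> nat \<Rightarrow> (nat \<Rightarrow> nat) \<Rightarrow> (nat \<times> nat \<Rightarrow> 'a) measure" where
  "data_measure Prior m n = Prior \<bind> (\<lambda>D. PiM {(j, l). j < m \<and> l < n j} (\<lambda>_. D))"

definition agent_data :: "(nat \<Rightarrow> nat) \<Rightarrow> nat \<Rightarrow> (nat \<times> nat \<Rightarrow> 'a) \<Rightarrow> 'a list" where
  "agent_data n j \<omega> = map (\<lambda>l. \<omega> (j, l)) [0..<n j]"

definition others_sub ::
  "nat \<Rightarrow> (nat \<Rightarrow> 'a list \<Rightarrow> 'a list) \<Rightarrow> (nat \<Rightarrow> nat) \<Rightarrow> nat \<Rightarrow> (nat \<times> nat \<Rightarrow> 'a) \<Rightarrow> 'a list" where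
  "others_sub m f n i \<omega> = concat (map (\<lambda>j. f j (agent_data n j \<omega>)) (filter (\<lambda>j. j \<noteq> i) [0..<m]))"

definition expected_loss ::
  "'a measure measure \<Rightarrow> nat \<Rightarrow> (nat \<Rightarrow> 'a \<Rightarrow> real) \<Rightarrow> (nat \<Rightarrow> nat \<Rightarrow> nat \<Rightarrow> 'a list \<Rightarrow> real \<Rightarrow> real)
     \<Rightarrow> nat \<Rightarrow> (nat \<Rightarrow> 'a list \<Rightarrow> 'a list) \<Rightarrow> (nat \<Rightarrow> nat) \<Rightarrow> nat \<Rightarrow> real" where
  "expected_loss Prior K \<phi> h m f n i =
     (\<integral>\<omega>. mech_loss K \<phi> h (f i (agent_data n i \<omega>)) (others_sub m f n i \<omega>) \<partial>data_measure Prior m n)"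

text \<open>Joint law of (Y_1..Y_j, T, Z_1..Z_r): D ~ Prior, then i.i.d. from D;
  coordinates 0..j-1 are Y, coordinate j is T, coordinates j+1..j+r are Z.\<close>
definition h_space :: "'a measure measure \<Rightarrow> nat \<Rightarrow> nat \<Rightarrow> (nat \<Rightarrow> 'a) measure" where
  "h_space Prior j r = Prior \<bind> (\<lambda>D. PiM {..<j + 1 + r} (\<lambda>_. D))"

definition valid_h ::
  "'a measure \<Rightarrow> 'a measure measure \<Rightarrow> nat \<Rightarrow> (nat \<Rightarrow> 'a \<Rightarrow> real)
     \<Rightarrow> (nat \<Rightarrow> nat \<Rightarrow> nat \<Rightarrow> 'a list \<Rightarrow> real \<Rightarrow> real) \<Rightarrow> bool" where
  "valid_h M Prior K \<phi> h \<longleftrightarrow>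
    (\<forall>k<K. \<forall>j r. 1 \<le> r \<longrightarrow>
       (\<lambda>(xs, t). h k j r xs t) \<in> borel_measurable (listM M \<Otimes>\<^sub>M borel)
     \<and> (\<forall>xs t. xs \<in> lists (space M) \<longrightarrow> length xs = j \<longrightarrow> h k j r xs t \<in> {0..1})
     \<and> (AE \<omega> in h_space Prior j r.
          h k j r (map \<omega> [0..<j]) (\<phi> k (\<omega> j)) =
          real_cond_exp (h_space Prior j r)
            (vimage_algebra (space (h_space Prior j r))
               (\<lambda>\<omega>. (map \<omega> [0..<j], \<phi> k (\<omega> j))) (listM M \<Otimes>\<^sub>M borel))
            (\<lambda>\<omega>. ecdf (map (\<phi> k) (map \<omega> [j + 1..<j + 1 + r])) (\<phi> k (\<omega> j))) \<omega>))"

text \<open>D ~ Prior, then an i.i.d. sequence from D; coordinate 0 is T, coordinate 1 is Z,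
  coordinate l+1 is X_l (l >= 1).\<close>
definition seq_space :: "'a measure measure \<Rightarrow> (nat \<Rightarrow> 'a) measure" where
  "seq_space Prior = Prior \<bind> (\<lambda>D. PiM UNIV (\<lambda>_. D))"

definition cond_sigma :: "'a measure \<Rightarrow> 'a measure measure \<Rightarrow> ('a \<Rightarrow> real) \<Rightarrow> nat \<Rightarrow> (nat \<Rightarrow> 'a) measure" where
  "cond_sigma M Prior \<phi>k n = vimage_algebra (space (seq_space Prior))
      (\<lambda>\<omega>. (\<phi>k (\<omega> 0), map \<omega> [2..<n + 2])) (borel \<Otimes>\<^sub>M listM M)"

definition degenerate :: "'a measure \<Rightarrow> 'a measure measure \<Rightarrow> ('a \<Rightarrow> real) \<Rightarrow> bool" where
  "degenerate M Prior \<phi>k \<longleftrightarrow>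
    (\<exists>n. AE \<omega> in seq_space Prior.
       real_cond_exp (seq_space Prior) (cond_sigma M Prior \<phi>k n)
         (indicator {\<omega>. \<phi>k (\<omega> 1) \<le> \<phi>k (\<omega> 0)}) \<omega> =
       real_cond_exp (seq_space Prior) (cond_sigma M Prior \<phi>k (Suc n))
         (indicator {\<omega>. \<phi>k (\<omega> 1) \<le> \<phi>k (\<omega> 0)}) \<omega>)"

end

theory Submission
  imports Defs
begin

text \<open>Since D is drawn from the prior and all points are conditionally i.i.d., the joint law
  of all data is invariant under relabelling of the points. Hence, in expectation, agent i's
  loss is the average over features phi of a canonical loss in which the agent sees its own
  data and phi T and predicts the empirical rank F of phi T among the values phi Z.

  (i) For each feature, the truthful prediction h is the conditional expectation of F given
  (own data, phi T), so by Pythagoras in L^2 any prediction computed from a misreport f(X_i) pays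
  its squared distance from h in addition.

  (ii) The prediction from the first c points is also a function of the first c + 1 points,
  so the same decomposition shows that the truthful loss with c points exceeds that with c + 1
  points by the expected squared difference of the two predictions. By exchangeability these
  predictions are versions of P(phi Z <= phi T | phi T, X_1, ..., X_c) and of the same
  probability given one more point, so if the difference vanished for some feature phi the prior
  would be degenerate for it.\<close>

section \<open>Finite sequences as a measurable space\<close>

definition listM_generator :: "'a measure \<Rightarrow> 'a list set set" where
  "listM_generator M = (\<Union>n. {{xs \<in> lists (space M). length xs = n \<and> (\<lambda>i\<in>{..<n}. xs ! i) \<in> A} | A.
     A \<in> sets (PiM {..<n} (\<lambda>_. M))})"

lemma listM_generator_Pow: "listM_generator M \<subseteq> Pow (lists (space M))"
  unfolding listM_generator_def by auto

lemma listM_eq_sigma: "listM M = sigma (lists (space M)) (listM_generator M)"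
  unfolding listM_def listM_generator_def ..

lemma space_listM: "space (listM M) = lists (space M)"
  unfolding listM_eq_sigma using listM_generator_Pow by (rule space_measure_of)

lemma sets_listM: "sets (listM M) = sigma_sets (lists (space M)) (listM_generator M)"
  unfolding listM_eq_sigma using listM_generator_Pow by (rule sets_measure_of)

lemma sets_listM_generator:
  assumes "A \<in> sets (PiM {..<n} (\<lambda>_. M))"
  shows "{xs \<in> lists (space M). length xs = n \<and> (\<lambda>i\<in>{..<n}. xs ! i) \<in> A} \<in> sets (listM M)"
  unfolding sets_listM using assms by (intro sigma_sets.Basic) (auto simp: listM_generator_def)

lemma sets_listM_length: "{xs \<in> lists (space M). length xs = n} \<in> sets (listM M)"
proof -
  have "{xs \<in> lists (space M). length xs = n} =
      {xs \<in> lists (space M). length xs = n \<and> (\<lambda>i\<in>{..<n}. xs ! i) \<in> space (PiM {..<n} (\<lambda>_. M))}"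
    by (auto simp: space_PiM)
  then show ?thesis using sets_listM_generator[OF sets.top] by simp
qed

lemma map_in_lists_PiM:
  assumes "\<omega> \<in> space (PiM I (\<lambda>_. M))" "set is \<subseteq> I"
  shows "map \<omega> is \<in> lists (space M)"
  using PiE_mem[OF assms(1)[unfolded space_PiM]] assms(2) by (intro in_listsI) auto

lemma restrict_nth_map_upt:
  assumes "x \<in> extensional {..<n}"
  shows "(\<lambda>i\<in>{..<n}. map x [0..<n] ! i) = x"
  using assms by (intro extensionalityI[OF restrict_extensional]) auto

lemma measurable_map_upt_listM: "(\<lambda>x. map x [0..<n]) \<in> PiM {..<n} (\<lambda>_. M) \<rightarrow>\<^sub>M listM M"
proof (rule measurable_sigma_sets[OF sets_listM listM_generator_Pow])
  show "(\<lambda>x. map x [0..<n]) \<in> space (PiM {..<n} (\<lambda>_. M)) \<rightarrow> lists (space M)"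
    by (intro Pi_I map_in_lists_PiM) auto
next
  fix G assume "G \<in> listM_generator M"
  then obtain n' A where G: "G = {xs \<in> lists (space M). length xs = n' \<and> (\<lambda>i\<in>{..<n'}. xs ! i) \<in> A}"
    and A: "A \<in> sets (PiM {..<n'} (\<lambda>_. M))"
    unfolding listM_generator_def by auto
  let ?\<Omega> = "space (PiM {..<n} (\<lambda>_. M))"
  show "(\<lambda>x. map x [0..<n]) -` G \<inter> ?\<Omega> \<in> sets (PiM {..<n} (\<lambda>_. M))"
  proof (cases "n' = n")
    case True
    have "x \<in> (\<lambda>x. map x [0..<n]) -` G \<longleftrightarrow> x \<in> A" if x: "x \<in> ?\<Omega>" for x
    proof -
      have "x \<in> extensional {..<n}"
        using x by (simp add: space_PiM PiE_iff)
      moreover have "map x [0..<n] \<in> lists (space M)"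
        using x by (rule map_in_lists_PiM) auto
      ultimately show ?thesis by (simp add: G True restrict_nth_map_upt)
    qed
    then have "(\<lambda>x. map x [0..<n]) -` G \<inter> ?\<Omega> = A \<inter> ?\<Omega>" by blast
    with A True show ?thesis by simp
  next
    case False
    then have "(\<lambda>x. map x [0..<n]) -` G = {}" by (auto simp: G)
    then show ?thesis by simp
  qed
qed

lemma measurable_map_listM:
  assumes "set is \<subseteq> I"
  shows "(\<lambda>\<omega>. map \<omega> is) \<in> PiM I (\<lambda>_. M) \<rightarrow>\<^sub>M listM M"
proof -
  have "(\<lambda>\<omega>. \<lambda>q\<in>{..<length is}. \<omega> (is ! q)) \<in> PiM I (\<lambda>_. M) \<rightarrow>\<^sub>M PiM {..<length is} (\<lambda>_. M)"
    using assms by (intro measurable_restrict measurable_PiM_component_rev) auto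
  from measurable_comp[OF this measurable_map_upt_listM]
  show ?thesis
    by (rule measurable_cong[THEN iffD1, rotated]) (auto intro: nth_equalityI)
qed

lemma measurable_listM_by_length:
  assumes g: "\<And>n. (\<lambda>x. g (map x [0..<n])) \<in> PiM {..<n} (\<lambda>_. M) \<rightarrow>\<^sub>M N"
  shows "g \<in> listM M \<rightarrow>\<^sub>M N"
proof (rule measurable_piecewise_restrict[of "range (\<lambda>n. {xs. length xs = n})"])
  fix \<Omega> assume "\<Omega> \<in> range (\<lambda>n. {xs::'a list. length xs = n})"
  then obtain n where \<Omega>: "\<Omega> = {xs. length xs = n}" by auto
  have "\<Omega> \<inter> space (listM M) = {xs \<in> lists (space M). length xs = n}"
    by (auto simp: \<Omega> space_listM)
  then show "\<Omega> \<inter> space (listM M) \<in> sets (listM M)"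
    using sets_listM_length by simp
  have "(\<lambda>xs. \<lambda>i\<in>{..<n}. xs ! i) \<in> restrict_space (listM M) \<Omega> \<rightarrow>\<^sub>M PiM {..<n} (\<lambda>_. M)"
  proof (rule measurableI)
    fix A assume A: "A \<in> sets (PiM {..<n} (\<lambda>_. M))"
    have "(\<lambda>xs. \<lambda>i\<in>{..<n}. xs ! i) -` A \<inter> space (restrict_space (listM M) \<Omega>)
        = \<Omega> \<inter> {xs \<in> lists (space M). length xs = n \<and> (\<lambda>i\<in>{..<n}. xs ! i) \<in> A}"
      by (auto simp: space_restrict_space space_listM \<Omega>)
    with sets_listM_generator[OF A]
    show "(\<lambda>xs. \<lambda>i\<in>{..<n}. xs ! i) -` A \<inter> space (restrict_space (listM M) \<Omega>)
        \<in> sets (restrict_space (listM M) \<Omega>)"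
      unfolding sets_restrict_space by (simp only:) (rule imageI)
  qed (auto simp: space_restrict_space space_listM space_PiM \<Omega>)
  from measurable_comp[OF this g, unfolded comp_def]
  show "g \<in> restrict_space (listM M) \<Omega> \<rightarrow>\<^sub>M N"
  proof (rule measurable_cong[THEN iffD1, rotated])
    fix xs assume "xs \<in> space (restrict_space (listM M) \<Omega>)"
    then have "map (\<lambda>i\<in>{..<n}. xs ! i) [0..<n] = xs"
      by (intro nth_equalityI) (auto simp: space_restrict_space \<Omega>)
    then show "g (map (\<lambda>i\<in>{..<n}. xs ! i) [0..<n]) = g xs" by simp
  qed
qed auto

lemma measurable_listM_length_pair:
  assumes H: "\<And>j. (\<lambda>(xs, t). H j xs t) \<in> listM M \<Otimes>\<^sub>M B \<rightarrow>\<^sub>M N"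
  shows "(\<lambda>(xs, t). H (length xs) xs t) \<in> listM M \<Otimes>\<^sub>M B \<rightarrow>\<^sub>M N"
proof (rule measurable_piecewise_restrict[of "range (\<lambda>n. {p. length (fst p) = n})"])
  fix \<Omega> assume "\<Omega> \<in> range (\<lambda>n. {p::'a list \<times> 'b. length (fst p) = n})"
  then obtain n where \<Omega>: "\<Omega> = {p. length (fst p) = n}" by auto
  have "\<Omega> \<inter> space (listM M \<Otimes>\<^sub>M B) = {xs \<in> lists (space M). length xs = n} \<times> space B"
    unfolding \<Omega> space_pair_measure space_listM by auto
  then show "\<Omega> \<inter> space (listM M \<Otimes>\<^sub>M B) \<in> sets (listM M \<Otimes>\<^sub>M B)"
    using pair_measureI[OF sets_listM_length sets.top] by simp
  from measurable_restrict_space1[OF H[of n]]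
  show "(\<lambda>(xs, t). H (length xs) xs t) \<in> restrict_space (listM M \<Otimes>\<^sub>M B) \<Omega> \<rightarrow>\<^sub>M N"
    by (rule measurable_cong[THEN iffD1, rotated]) (auto simp: space_restrict_space \<Omega>)
qed auto

lemma measurable_take_listM: "take c \<in> listM M \<rightarrow>\<^sub>M listM M"
proof (rule measurable_listM_by_length)
  fix n
  have "(\<lambda>x. map x (take c [0..<n])) \<in> PiM {..<n} (\<lambda>_. M) \<rightarrow>\<^sub>M listM M"
    by (rule measurable_map_listM) (auto dest: in_set_takeD)
  then show "(\<lambda>x. take c (map x [0..<n])) \<in> PiM {..<n} (\<lambda>_. M) \<rightarrow>\<^sub>M listM M"
    by (simp add: take_map)
qed

section \<open>Conditional expectation as an orthogonal projection\<close>

lemma finite_measure_subalgebra_vimage: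
  assumes "finite_measure N" "T \<in> N \<rightarrow>\<^sub>M X"
  shows "finite_measure_subalgebra N (vimage_algebra (space N) T X)"
proof -
  have "T \<in> space N \<rightarrow> space X" using measurable_space[OF assms(2)] by auto
  then have "sets (vimage_algebra (space N) T X) \<subseteq> sets N"
    using assms(2) by (auto simp: sets_vimage_algebra2 measurable_sets)
  then show ?thesis using assms(1)
    by (simp add: finite_measure_subalgebra_def finite_measure_subalgebra_axioms_def subalgebra_def)
qed

lemma (in sigma_finite_subalgebra) integral_mult_cond_exp:
  fixes f g u :: "'a \<Rightarrow> real"
  assumes u: "AE x in M. u x = real_cond_exp M F f x" "u \<in> borel_measurable M"
    and int: "integrable M (\<lambda>x. g x * f x)"
    and [measurable]: "g \<in> borel_measurable F" "f \<in> borel_measurable M"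
  shows "(\<integral>x. g x * u x \<partial>M) = (\<integral>x. g x * f x \<partial>M)"
proof -
  have [measurable]: "g \<in> borel_measurable M"
    by (rule measurable_from_subalg[OF subalg]) simp
  have "(\<integral>x. g x * u x \<partial>M) = (\<integral>x. g x * real_cond_exp M F f x \<partial>M)"
    using u by (intro integral_cong_AE) auto
  also have "\<dots> = (\<integral>x. g x * f x \<partial>M)"
    by (rule real_cond_exp_intg(2)[OF int]) simp_all
  finally show ?thesis .
qed

lemma (in finite_measure_subalgebra) cond_exp_pythagoras:
  fixes f u w :: "'a \<Rightarrow> real"
  assumes u: "AE x in M. u x = real_cond_exp M F f x"
    and [measurable]: "f \<in> borel_measurable M" "u \<in> borel_measurable F" "w \<in> borel_measurable F"
    and bounded: "\<And>x. x \<in> space M \<Longrightarrow> \<bar>f x\<bar> \<le> B \<and> \<bar>u x\<bar> \<le> B \<and> \<bar>w x\<bar> \<le> B"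
  shows "(\<integral>x. (w x - f x)\<^sup>2 \<partial>M) = (\<integral>x. (w x - u x)\<^sup>2 \<partial>M) + (\<integral>x. (u x - f x)\<^sup>2 \<partial>M)"
proof -
  have [measurable]: "u \<in> borel_measurable M" "w \<in> borel_measurable M"
    by (rule measurable_from_subalg[OF subalg], simp)+
  have int: "integrable M (\<lambda>x. a x * b x)"
    if [measurable]: "a \<in> borel_measurable M" "b \<in> borel_measurable M"
      and ab: "\<And>x. x \<in> space M \<Longrightarrow> \<bar>a x\<bar> \<le> 2 * B \<and> \<bar>b x\<bar> \<le> 2 * B" for a b
  proof (rule integrable_const_bound[where B = "2 * B * (2 * B)"])
    show "AE x in M. norm (a x * b x) \<le> 2 * B * (2 * B)"
    proof (rule AE_I2)
      fix x assume "x \<in> space M"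
      with ab have "\<bar>a x\<bar> \<le> 2 * B" "\<bar>b x\<bar> \<le> 2 * B" by auto
      moreover have "0 \<le> \<bar>b x\<bar>" by simp
      ultimately show "norm (a x * b x) \<le> 2 * B * (2 * B)"
        unfolding real_norm_def abs_mult by (intro mult_mono) auto
    qed
  qed simp
  have int_wu_f: "integrable M (\<lambda>x. (w x - u x) * f x)"
   and int_wu_u: "integrable M (\<lambda>x. (w x - u x) * u x)"
   and int_cross: "integrable M (\<lambda>x. (w x - u x) * (u x - f x))"
   and int_wu_sq: "integrable M (\<lambda>x. (w x - u x) * (w x - u x))"
   and int_uf_sq: "integrable M (\<lambda>x. (u x - f x) * (u x - f x))"
    using bounded by (intro int; force)+
  have "(\<integral>x. (w x - u x) * u x \<partial>M) = (\<integral>x. (w x - u x) * f x \<partial>M)"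
    by (rule integral_mult_cond_exp[OF u _ int_wu_f]) simp_all
  then have cross: "(\<integral>x. (w x - u x) * (u x - f x) \<partial>M) = 0"
    using int_wu_f int_wu_u by (simp add: right_diff_distrib)
  have "(\<integral>x. (w x - f x)\<^sup>2 \<partial>M)
      = (\<integral>x. (w x - u x) * (w x - u x) + (u x - f x) * (u x - f x) + 2 * ((w x - u x) * (u x - f x)) \<partial>M)"
    by (intro Bochner_Integration.integral_cong refl) (simp add: power2_eq_square algebra_simps)
  also have "\<dots> = (\<integral>x. (w x - u x) * (w x - u x) \<partial>M) + (\<integral>x. (u x - f x) * (u x - f x) \<partial>M)
      + 2 * (\<integral>x. (w x - u x) * (u x - f x) \<partial>M)"
    using int_wu_sq int_uf_sq int_cross by simp
  also have "\<dots> = (\<integral>x. (w x - u x)\<^sup>2 \<partial>M) + (\<integral>x. (u x - f x)\<^sup>2 \<partial>M)"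
    unfolding cross power2_eq_square by simp
  finally show ?thesis .
qed

section \<open>Exchangeable laws\<close>

lemma measurable_iid_PiM:
  "(\<lambda>D. PiM I (\<lambda>_. D)) \<in> prob_algebra M \<rightarrow>\<^sub>M prob_algebra (PiM I (\<lambda>_. M))"
proof (rule measurable_prob_algebra_generated[OF sets_PiM Int_stable_prod_algebra prod_algebra_sets_into_space])
  fix D assume "D \<in> space (prob_algebra M)"
  then have D: "prob_space D" "sets D = sets M" by (auto simp: space_prob_algebra)
  then show "prob_space (PiM I (\<lambda>_. D))" by (intro prob_space_PiM) auto
  show "sets (PiM I (\<lambda>_. D)) = sets (PiM I (\<lambda>_. M))" using D by (intro sets_PiM_cong) auto
next
  fix A assume "A \<in> prod_algebra I (\<lambda>_. M)"
  then obtain J E where A: "A = prod_emb I (\<lambda>_. M) J (\<Pi>\<^sub>E j\<in>J. E j)"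
    "finite J" "J \<subseteq> I" "\<And>i. i \<in> J \<Longrightarrow> E i \<in> sets M"
    by (rule prod_algebraE) auto
  have "(\<lambda>D. \<Prod>j\<in>J. emeasure D (E j)) \<in> borel_measurable (prob_algebra M)"
    using A(4) unfolding prob_algebra_def
    by (intro borel_measurable_prod_ennreal measurable_restrict_space1 measurable_emeasure_subprob_algebra) auto
  then show "(\<lambda>D. emeasure (PiM I (\<lambda>_. D)) A) \<in> borel_measurable (prob_algebra M)"
  proof (rule measurable_cong[THEN iffD1, rotated])
    fix D assume "D \<in> space (prob_algebra M)"
    then have D: "prob_space D" "sets D = sets M" by (auto simp: space_prob_algebra)
    then have "space D = space M" by (intro sets_eq_imp_space_eq) simp
    then have "A = prod_emb I (\<lambda>_. D) J (\<Pi>\<^sub>E j\<in>J. E j)" using A(1) by (simp add: prod_emb_def)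
    then show "(\<Prod>j\<in>J. emeasure D (E j)) = emeasure (PiM I (\<lambda>_. D)) A"
      using A(2-4) D by (simp add: emeasure_PiM_emb prob_space.emeasure_space_1)
  qed
qed

lemma measurable_reindex_PiM:
  assumes "\<sigma> \<in> J \<rightarrow> I"
  shows "(\<lambda>\<omega>. \<lambda>q\<in>J. \<omega> (\<sigma> q)) \<in> PiM I (\<lambda>_. M) \<rightarrow>\<^sub>M PiM J (\<lambda>_. M)"
  using assms by (intro measurable_restrict measurable_PiM_component_rev) auto

locale iid_mixture =
  fixes M :: "'a measure" and Prior :: "'a measure measure"
  assumes prior: "Prior \<in> space (prob_algebra (prob_algebra M))"
begin

definition iid_mix :: "'i set \<Rightarrow> ('i \<Rightarrow> 'a) measure" where
  "iid_mix I = Prior \<bind> (\<lambda>D. PiM I (\<lambda>_. D))"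

lemma h_space_eq_iid_mix: "h_space Prior j r = iid_mix {..<j + 1 + r}"
  unfolding h_space_def iid_mix_def ..

lemma seq_space_eq_iid_mix: "seq_space Prior = iid_mix UNIV"
  unfolding seq_space_def iid_mix_def ..

lemma data_measure_eq_iid_mix: "data_measure Prior m n = iid_mix {(j, l). j < m \<and> l < n j}"
  unfolding data_measure_def iid_mix_def ..

lemma sets_Prior: "sets Prior = sets (prob_algebra M)"
  using prior by (simp add: space_prob_algebra)

lemma space_Prior: "space Prior = space (prob_algebra M)"
  using sets_Prior by (rule sets_eq_imp_space_eq)

lemma space_Prior_nonempty: "space Prior \<noteq> {}"
  using prior by (auto simp: space_prob_algebra dest: prob_space.not_empty)

lemma prob_space_iid_mix: "prob_space (iid_mix I)"
  unfolding iid_mix_def using prior measurable_iid_PiM by (rule prob_space_bind')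

lemma sets_iid_mix: "sets (iid_mix I) = sets (PiM I (\<lambda>_. M))"
  unfolding iid_mix_def
proof (rule sets_bind[OF _ space_Prior_nonempty])
  fix D assume "D \<in> space Prior"
  then have "sets D = sets M" by (auto simp: space_Prior space_prob_algebra)
  then show "sets (PiM I (\<lambda>_. D)) = sets (PiM I (\<lambda>_. M))" by (intro sets_PiM_cong) auto
qed

lemma space_iid_mix: "space (iid_mix I) = space (PiM I (\<lambda>_. M))"
  using sets_iid_mix by (rule sets_eq_imp_space_eq)

lemma measurable_iid_mix: "f \<in> PiM I (\<lambda>_. M) \<rightarrow>\<^sub>M N \<Longrightarrow> f \<in> iid_mix I \<rightarrow>\<^sub>M N"
  using measurable_cong_sets[OF sets_iid_mix refl] by blast

lemma integrable_iid_mix_bounded: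
  fixes f :: "_ \<Rightarrow> real"
  assumes "f \<in> borel_measurable (PiM I (\<lambda>_. M))" "\<And>\<omega>. \<omega> \<in> space (PiM I (\<lambda>_. M)) \<Longrightarrow> \<bar>f \<omega>\<bar> \<le> B"
  shows "integrable (iid_mix I) f"
proof -
  interpret prob_space "iid_mix I" by (rule prob_space_iid_mix)
  show ?thesis
    using assms by (intro integrable_const_bound[where B = B] AE_I2 measurable_iid_mix) (auto simp: space_iid_mix)
qed

lemma distr_iid_mix_reindex:
  assumes inj: "inj_on \<sigma> J" and into: "\<sigma> \<in> J \<rightarrow> I"
  shows "distr (iid_mix I) (PiM J (\<lambda>_. M)) (\<lambda>\<omega>. \<lambda>q\<in>J. \<omega> (\<sigma> q)) = iid_mix J"
proof -
  have "(\<lambda>D. PiM I (\<lambda>_. D)) \<in> Prior \<rightarrow>\<^sub>M prob_algebra (PiM I (\<lambda>_. M))"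
    using measurable_iid_PiM measurable_cong_sets[OF sets_Prior refl] by blast
  note kernel = measurable_prob_algebraD[OF this]
  have "distr (iid_mix I) (PiM J (\<lambda>_. M)) (\<lambda>\<omega>. \<lambda>q\<in>J. \<omega> (\<sigma> q))
      = Prior \<bind> (\<lambda>D. distr (PiM I (\<lambda>_. D)) (PiM J (\<lambda>_. M)) (\<lambda>\<omega>. \<lambda>q\<in>J. \<omega> (\<sigma> q)))"
    unfolding iid_mix_def
    by (rule distr_bind[OF kernel space_Prior_nonempty measurable_reindex_PiM[OF into]])
  also have "\<dots> = iid_mix J" unfolding iid_mix_def
  proof (rule bind_cong[OF refl])
    fix D assume "D \<in> space Prior"
    then have D: "prob_space D" "sets D = sets M" by (auto simp: space_Prior space_prob_algebra)
    have "distr (PiM I (\<lambda>_. D)) (PiM J (\<lambda>_. M)) (\<lambda>\<omega>. \<lambda>q\<in>J. \<omega> (\<sigma> q))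
        = distr (PiM I (\<lambda>_. D)) (PiM J (\<lambda>_. D)) (\<lambda>\<omega>. \<lambda>q\<in>J. \<omega> (\<sigma> q))"
      using D by (intro distr_cong refl sets_PiM_cong) auto
    also have "\<dots> = PiM J (\<lambda>_. D)"
      using distr_PiM_reindex[of I "\<lambda>_. D" \<sigma> J] D inj into by simp
    finally show "distr (PiM I (\<lambda>_. D)) (PiM J (\<lambda>_. M)) (\<lambda>\<omega>. \<lambda>q\<in>J. \<omega> (\<sigma> q)) = PiM J (\<lambda>_. D)" .
  qed
  finally show ?thesis .
qed

lemma integral_iid_mix_reindex:
  fixes g :: "_ \<Rightarrow> real"
  assumes "inj_on \<sigma> J" "\<sigma> \<in> J \<rightarrow> I" "g \<in> borel_measurable (PiM J (\<lambda>_. M))"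
  shows "(\<integral>\<omega>. g (\<lambda>q\<in>J. \<omega> (\<sigma> q)) \<partial>iid_mix I) = (\<integral>\<omega>. g \<omega> \<partial>iid_mix J)"
proof -
  have "(\<integral>\<omega>. g \<omega> \<partial>iid_mix J) = (\<integral>\<omega>. g \<omega> \<partial>distr (iid_mix I) (PiM J (\<lambda>_. M)) (\<lambda>\<omega>. \<lambda>q\<in>J. \<omega> (\<sigma> q)))"
    using distr_iid_mix_reindex[OF assms(1,2)] by simp
  also have "\<dots> = (\<integral>\<omega>. g (\<lambda>q\<in>J. \<omega> (\<sigma> q)) \<partial>iid_mix I)"
    by (rule integral_distr[OF measurable_iid_mix[OF measurable_reindex_PiM[OF assms(2)]] assms(3)])
  finally show ?thesis by simp
qed

lemma integral_iid_mix_list: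
  fixes G :: "_ \<Rightarrow> real"
  assumes "distinct L" "set L \<subseteq> I" "G \<in> borel_measurable (PiM {..<length L} (\<lambda>_. M))"
  shows "(\<integral>\<omega>. G (\<lambda>q\<in>{..<length L}. \<omega> (L ! q)) \<partial>iid_mix I) = (\<integral>\<omega>. G \<omega> \<partial>iid_mix {..<length L})"
  using assms by (intro integral_iid_mix_reindex inj_on_nth) auto

lemma AE_iid_mix_reindex:
  assumes "inj_on \<sigma> J" "\<sigma> \<in> J \<rightarrow> I" "AE \<omega> in iid_mix J. Q \<omega>"
  shows "AE \<omega> in iid_mix I. Q (\<lambda>q\<in>J. \<omega> (\<sigma> q))"
proof (rule AE_distrD[OF measurable_iid_mix[OF measurable_reindex_PiM[OF assms(2)]]])
  show "AE \<omega> in distr (iid_mix I) (PiM J (\<lambda>_. M)) (\<lambda>\<omega>. \<lambda>q\<in>J. \<omega> (\<sigma> q)). Q \<omega>"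
    unfolding distr_iid_mix_reindex[OF assms(1,2)] by (rule assms(3))
qed

end

section \<open>The loss attached to a single feature\<close>

lemma ecdf_nonneg: "0 \<le> ecdf S t"
  unfolding ecdf_def by simp

lemma ecdf_le_1: "ecdf S t \<le> 1"
  unfolding ecdf_def by (simp add: divide_le_eq_1)

lemma ecdf_map_upt:
  "ecdf (map g [a..<a + r]) t = (\<Sum>s<r. if g (a + s) \<le> t then 1 else 0) / real r"
proof -
  have "real (length (filter (\<lambda>x. x \<le> t) (map g [a..<a + r])))
      = (\<Sum>s<r. if g (a + s) \<le> t then 1 else 0)"
    by (induction r) auto
  then show ?thesis unfolding ecdf_def by simp
qed

definition empirical_rank :: "('a \<Rightarrow> real) \<Rightarrow> nat \<Rightarrow> nat \<Rightarrow> (nat \<Rightarrow> 'a) \<Rightarrow> real" where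
  "empirical_rank \<psi> j r \<omega> = ecdf (map \<psi> (map \<omega> [j + 1..<j + 1 + r])) (\<psi> (\<omega> j))"

definition sq_error ::
  "('a \<Rightarrow> real) \<Rightarrow> (nat \<Rightarrow> nat \<Rightarrow> 'a list \<Rightarrow> real \<Rightarrow> real) \<Rightarrow> ('a list \<Rightarrow> 'a list)
     \<Rightarrow> nat \<Rightarrow> nat \<Rightarrow> (nat \<Rightarrow> 'a) \<Rightarrow> real" where
  "sq_error \<psi> H g j r \<omega> =
     (H (length (g (map \<omega> [0..<j]))) r (g (map \<omega> [0..<j])) (\<psi> (\<omega> j)) - empirical_rank \<psi> j r \<omega>)\<^sup>2"

definition feature_loss ::
  "'a measure measure \<Rightarrow> ('a \<Rightarrow> real) \<Rightarrow> (nat \<Rightarrow> nat \<Rightarrow> 'a list \<Rightarrow> real \<Rightarrow> real)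
     \<Rightarrow> ('a list \<Rightarrow> 'a list) \<Rightarrow> nat \<Rightarrow> nat \<Rightarrow> real" where
  "feature_loss Prior \<psi> H g j r = (\<integral>\<omega>. sq_error \<psi> H g j r \<omega> \<partial>h_space Prior j r)"

lemma abs_empirical_rank_le_1: "\<bar>empirical_rank \<psi> j r \<omega>\<bar> \<le> 1"
  unfolding empirical_rank_def using ecdf_nonneg ecdf_le_1 by (simp add: abs_le_iff)

locale feature_predictor = iid_mixture +
  fixes \<psi> :: "'a \<Rightarrow> real" and H :: "nat \<Rightarrow> nat \<Rightarrow> 'a list \<Rightarrow> real \<Rightarrow> real"
  assumes measurable_feature [measurable]: "\<psi> \<in> borel_measurable M"
    and measurable_H: "1 \<le> r \<Longrightarrow> (\<lambda>(xs, t). H j r xs t) \<in> borel_measurable (listM M \<Otimes>\<^sub>M borel)"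
    and H_range: "1 \<le> r \<Longrightarrow> xs \<in> lists (space M) \<Longrightarrow> length xs = j \<Longrightarrow> H j r xs t \<in> {0..1}"
    and H_cond_exp: "1 \<le> r \<Longrightarrow> AE \<omega> in h_space Prior j r.
      H j r (map \<omega> [0..<j]) (\<psi> (\<omega> j)) =
      real_cond_exp (h_space Prior j r)
        (vimage_algebra (space (h_space Prior j r)) (\<lambda>\<omega>. (map \<omega> [0..<j], \<psi> (\<omega> j))) (listM M \<Otimes>\<^sub>M borel))
        (empirical_rank \<psi> j r) \<omega>"

lemma (in iid_mixture) feature_predictor_if_valid_h:
  assumes "valid_h M Prior K \<phi> h" "k < K" "\<phi> k \<in> borel_measurable M"
  shows "feature_predictor M Prior (\<phi> k) (h k)"
proof -
  have "\<forall>j r. 1 \<le> r \<longrightarrow>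
      (\<lambda>(xs, t). h k j r xs t) \<in> borel_measurable (listM M \<Otimes>\<^sub>M borel)
    \<and> (\<forall>xs t. xs \<in> lists (space M) \<longrightarrow> length xs = j \<longrightarrow> h k j r xs t \<in> {0..1})
    \<and> (AE \<omega> in h_space Prior j r. h k j r (map \<omega> [0..<j]) (\<phi> k (\<omega> j)) =
         real_cond_exp (h_space Prior j r)
           (vimage_algebra (space (h_space Prior j r)) (\<lambda>\<omega>. (map \<omega> [0..<j], \<phi> k (\<omega> j))) (listM M \<Otimes>\<^sub>M borel))
           (empirical_rank (\<phi> k) j r) \<omega>)"
    using assms(1,2) unfolding valid_h_def empirical_rank_def[abs_def] by blast
  then show ?thesis
    using assms(3) by unfold_locales blast+
qed

context feature_predictor
begin

lemma measurable_h_space: "f \<in> PiM {..<j + 1 + r} (\<lambda>_. M) \<rightarrow>\<^sub>M N \<Longrightarrow> f \<in> h_space Prior j r \<rightarrow>\<^sub>M N"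
  unfolding h_space_eq_iid_mix by (rule measurable_iid_mix)

lemma measurable_H_comp:
  "1 \<le> r \<Longrightarrow> f \<in> N \<rightarrow>\<^sub>M listM M \<Longrightarrow> t \<in> borel_measurable N \<Longrightarrow> (\<lambda>x. H j r (f x) (t x)) \<in> borel_measurable N"
  using measurable_comp[OF measurable_Pair measurable_H] by (simp add: comp_def)

lemma measurable_H_length_comp:
  assumes "1 \<le> r" "f \<in> N \<rightarrow>\<^sub>M listM M" "t \<in> borel_measurable N"
  shows "(\<lambda>x. H (length (f x)) r (f x) (t x)) \<in> borel_measurable N"
  using measurable_comp[OF measurable_Pair[OF assms(2,3)]
      measurable_listM_length_pair[of "\<lambda>j. H j r", OF measurable_H[OF assms(1)]]]
  by (simp add: comp_def)

lemma abs_H_le_1: "1 \<le> r \<Longrightarrow> xs \<in> lists (space M) \<Longrightarrow> length xs = j \<Longrightarrow> \<bar>H j r xs t\<bar> \<le> 1"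
  using H_range[of r xs j t] by auto

lemma measurable_feature_coord:
  "j \<in> I \<Longrightarrow> (\<lambda>\<omega>. \<psi> (\<omega> j)) \<in> borel_measurable (PiM I (\<lambda>_. M))"
  by measurable

lemma measurable_empirical_rank:
  "empirical_rank \<psi> j r \<in> borel_measurable (PiM {..<j + 1 + r} (\<lambda>_. M))"
proof -
  have "empirical_rank \<psi> j r = (\<lambda>\<omega>. (\<Sum>s<r. if \<psi> (\<omega> (j + 1 + s)) \<le> \<psi> (\<omega> j) then 1 else 0) / real r)"
  proof
    fix \<omega> :: "nat \<Rightarrow> 'a"
    show "empirical_rank \<psi> j r \<omega> = (\<Sum>s<r. if \<psi> (\<omega> (j + 1 + s)) \<le> \<psi> (\<omega> j) then 1 else 0) / real r"
      using ecdf_map_upt[of "\<lambda>q. \<psi> (\<omega> q)" "j + 1" r "\<psi> (\<omega> j)"]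
      by (simp only: empirical_rank_def map_map comp_def)
  qed
  also have "\<dots> \<in> borel_measurable (PiM {..<j + 1 + r} (\<lambda>_. M))"
  proof (intro borel_measurable_divide borel_measurable_sum borel_measurable_const)
    fix s assume "s \<in> {..<r}"
    then have [measurable]: "(\<lambda>\<omega>. \<psi> (\<omega> (j + 1 + s))) \<in> borel_measurable (PiM {..<j + 1 + r} (\<lambda>_. M))"
      by (intro measurable_feature_coord) simp
    show "(\<lambda>\<omega>. if \<psi> (\<omega> (j + 1 + s)) \<le> \<psi> (\<omega> j) then 1 else 0) \<in> borel_measurable (PiM {..<j + 1 + r} (\<lambda>_. M))"
      by measurable
  qed
  finally show ?thesis .
qed

lemma measurable_sq_error:
  assumes "1 \<le> r" "g \<in> listM M \<rightarrow>\<^sub>M listM M"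
  shows "sq_error \<psi> H g j r \<in> borel_measurable (PiM {..<j + 1 + r} (\<lambda>_. M))"
proof -
  have "(\<lambda>\<omega>. map \<omega> [0..<j]) \<in> PiM {..<j + 1 + r} (\<lambda>_. M) \<rightarrow>\<^sub>M listM M"
    by (rule measurable_map_listM) auto
  from measurable_comp[OF this assms(2)]
  have "(\<lambda>\<omega>. g (map \<omega> [0..<j])) \<in> PiM {..<j + 1 + r} (\<lambda>_. M) \<rightarrow>\<^sub>M listM M"
    by (simp add: comp_def)
  note [measurable] = measurable_H_length_comp[OF assms(1) this measurable_feature_coord]
    measurable_empirical_rank
  show ?thesis unfolding sq_error_def[abs_def] by measurable
qed

lemma abs_sq_error_le_4:
  assumes "1 \<le> r" "g \<in> listM M \<rightarrow>\<^sub>M listM M" "\<omega> \<in> space (PiM {..<j + 1 + r} (\<lambda>_. M))"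
  shows "\<bar>sq_error \<psi> H g j r \<omega>\<bar> \<le> 4"
proof -
  let ?d = "H (length (g (map \<omega> [0..<j]))) r (g (map \<omega> [0..<j])) (\<psi> (\<omega> j)) - empirical_rank \<psi> j r \<omega>"
  have "map \<omega> [0..<j] \<in> lists (space M)" using assms(3) by (rule map_in_lists_PiM) auto
  then have "g (map \<omega> [0..<j]) \<in> lists (space M)"
    using measurable_space[OF assms(2)] by (simp add: space_listM)
  then have "\<bar>H (length (g (map \<omega> [0..<j]))) r (g (map \<omega> [0..<j])) (\<psi> (\<omega> j))\<bar> \<le> 1"
    using abs_H_le_1[OF assms(1)] by simp
  then have "\<bar>?d\<bar> \<le> 2"
    using abs_empirical_rank_le_1[of \<psi> j r \<omega>] by (simp add: abs_le_iff)
  then have "\<bar>?d\<bar>\<^sup>2 \<le> 2\<^sup>2" by (intro power_mono) auto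
  then show ?thesis unfolding sq_error_def by simp
qed

lemma measurable_observation:
  "(\<lambda>\<omega>. (map \<omega> [0..<j], \<psi> (\<omega> j))) \<in> h_space Prior j r \<rightarrow>\<^sub>M listM M \<Otimes>\<^sub>M borel"
  by (intro measurable_h_space measurable_Pair measurable_map_listM measurable_feature_coord) auto

lemma finite_measure_subalgebra_observation:
  "finite_measure_subalgebra (h_space Prior j r)
     (vimage_algebra (space (h_space Prior j r)) (\<lambda>\<omega>. (map \<omega> [0..<j], \<psi> (\<omega> j))) (listM M \<Otimes>\<^sub>M borel))"
proof (rule finite_measure_subalgebra_vimage[OF _ measurable_observation])
  show "finite_measure (h_space Prior j r)"
    unfolding h_space_eq_iid_mix using prob_space_iid_mix by (rule prob_space.finite_measure)
qed

lemma measurable_observation_vimage: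
  assumes "f \<in> borel_measurable (listM M \<Otimes>\<^sub>M borel)"
  shows "(\<lambda>\<omega>. f (map \<omega> [0..<j], \<psi> (\<omega> j)))
    \<in> borel_measurable (vimage_algebra (space (h_space Prior j r)) (\<lambda>\<omega>. (map \<omega> [0..<j], \<psi> (\<omega> j))) (listM M \<Otimes>\<^sub>M borel))"
proof -
  have "(\<lambda>\<omega>. (map \<omega> [0..<j], \<psi> (\<omega> j)))
      \<in> vimage_algebra (space (h_space Prior j r)) (\<lambda>\<omega>. (map \<omega> [0..<j], \<psi> (\<omega> j))) (listM M \<Otimes>\<^sub>M borel)
        \<rightarrow>\<^sub>M listM M \<Otimes>\<^sub>M borel"
    using measurable_space[OF measurable_observation] by (intro measurable_vimage_algebra1) blast
  from measurable_comp[OF this assms] show ?thesis by (simp add: comp_def)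
qed

lemma feature_loss_decomposition:
  assumes r: "1 \<le> r"
    and w: "w \<in> borel_measurable (listM M \<Otimes>\<^sub>M borel)"
    and w_bounded: "\<And>xs t. xs \<in> lists (space M) \<Longrightarrow> length xs = j \<Longrightarrow> \<bar>w (xs, t)\<bar> \<le> 1"
  shows "(\<integral>\<omega>. (w (map \<omega> [0..<j], \<psi> (\<omega> j)) - empirical_rank \<psi> j r \<omega>)\<^sup>2 \<partial>h_space Prior j r)
       = (\<integral>\<omega>. (w (map \<omega> [0..<j], \<psi> (\<omega> j)) - H j r (map \<omega> [0..<j]) (\<psi> (\<omega> j)))\<^sup>2 \<partial>h_space Prior j r)
         + feature_loss Prior \<psi> H id j r"
proof -
  let ?N = "h_space Prior j r"
  interpret finite_measure_subalgebra ?N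
    "vimage_algebra (space ?N) (\<lambda>\<omega>. (map \<omega> [0..<j], \<psi> (\<omega> j))) (listM M \<Otimes>\<^sub>M borel)"
    by (rule finite_measure_subalgebra_observation)
  have "(\<integral>\<omega>. (w (map \<omega> [0..<j], \<psi> (\<omega> j)) - empirical_rank \<psi> j r \<omega>)\<^sup>2 \<partial>?N)
      = (\<integral>\<omega>. (w (map \<omega> [0..<j], \<psi> (\<omega> j)) - H j r (map \<omega> [0..<j]) (\<psi> (\<omega> j)))\<^sup>2 \<partial>?N)
        + (\<integral>\<omega>. (H j r (map \<omega> [0..<j]) (\<psi> (\<omega> j)) - empirical_rank \<psi> j r \<omega>)\<^sup>2 \<partial>?N)"
  proof (rule cond_exp_pythagoras[OF H_cond_exp[OF r]])
    show "empirical_rank \<psi> j r \<in> borel_measurable ?N"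
      using measurable_empirical_rank by (rule measurable_h_space)
    show "(\<lambda>\<omega>. H j r (map \<omega> [0..<j]) (\<psi> (\<omega> j)))
        \<in> borel_measurable (vimage_algebra (space ?N) (\<lambda>\<omega>. (map \<omega> [0..<j], \<psi> (\<omega> j))) (listM M \<Otimes>\<^sub>M borel))"
      using measurable_observation_vimage[OF measurable_H[OF r]] by simp
    show "(\<lambda>\<omega>. w (map \<omega> [0..<j], \<psi> (\<omega> j)))
        \<in> borel_measurable (vimage_algebra (space ?N) (\<lambda>\<omega>. (map \<omega> [0..<j], \<psi> (\<omega> j))) (listM M \<Otimes>\<^sub>M borel))"
      using w by (rule measurable_observation_vimage)
  next
    fix \<omega> assume "\<omega> \<in> space ?N"
    then have "map \<omega> [0..<j] \<in> lists (space M)"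
      by (intro map_in_lists_PiM) (auto simp: h_space_eq_iid_mix space_iid_mix)
    then show "\<bar>empirical_rank \<psi> j r \<omega>\<bar> \<le> 1 \<and> \<bar>H j r (map \<omega> [0..<j]) (\<psi> (\<omega> j))\<bar> \<le> 1
        \<and> \<bar>w (map \<omega> [0..<j], \<psi> (\<omega> j))\<bar> \<le> 1"
      using abs_empirical_rank_le_1 abs_H_le_1[OF r] w_bounded by simp
  qed
  also have "(\<integral>\<omega>. (H j r (map \<omega> [0..<j]) (\<psi> (\<omega> j)) - empirical_rank \<psi> j r \<omega>)\<^sup>2 \<partial>?N)
      = feature_loss Prior \<psi> H id j r"
    unfolding feature_loss_def sq_error_def by simp
  finally show ?thesis .
qed

lemma feature_loss_truthful_le:
  assumes r: "1 \<le> r" and g: "g \<in> listM M \<rightarrow>\<^sub>M listM M"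
  shows "feature_loss Prior \<psi> H id j r \<le> feature_loss Prior \<psi> H g j r"
proof -
  define w where "w = (\<lambda>(xs, t). H (length (g xs)) r (g xs) t)"
  have w: "w \<in> borel_measurable (listM M \<Otimes>\<^sub>M borel)"
    using measurable_H_length_comp[OF r measurable_comp[OF measurable_fst g] measurable_snd]
    by (simp add: w_def comp_def case_prod_beta)
  have w_bounded: "\<bar>w (xs, t)\<bar> \<le> 1" if "xs \<in> lists (space M)" for xs t
    using measurable_space[OF g] that abs_H_le_1[OF r] by (auto simp: w_def space_listM)
  have "feature_loss Prior \<psi> H g j r
      = (\<integral>\<omega>. (w (map \<omega> [0..<j], \<psi> (\<omega> j)) - empirical_rank \<psi> j r \<omega>)\<^sup>2 \<partial>h_space Prior j r)"
    by (simp add: feature_loss_def sq_error_def w_def)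
  also have "\<dots> = (\<integral>\<omega>. (w (map \<omega> [0..<j], \<psi> (\<omega> j)) - H j r (map \<omega> [0..<j]) (\<psi> (\<omega> j)))\<^sup>2 \<partial>h_space Prior j r)
        + feature_loss Prior \<psi> H id j r"
    using w w_bounded by (rule feature_loss_decomposition[OF r])
  finally show ?thesis by (simp add: integral_nonneg_AE)
qed

end

section \<open>One more sample helps unless the prior is degenerate\<close>

text \<open>Lays out the coordinates of h_space Prior n r inside those of seq_space Prior:
  the agent's data go to X_1, ..., X_n, T to T, the s-th point of Z to Z, and the
  remaining points of Z to unused coordinates.\<close>
definition seq_embedding :: "nat \<Rightarrow> nat \<Rightarrow> nat \<Rightarrow> nat" where
  "seq_embedding n s q = (if q < n then q + 2 else if q = n then 0 else if q = n + 1 + s then 1 else q + 2)"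

lemma inj_seq_embedding: "inj_on (seq_embedding n s) J"
  unfolding inj_on_def seq_embedding_def by (auto split: if_splits)

lemma seq_embedding_apply:
  assumes "s < r"
  shows "(\<lambda>q\<in>{..<n + 1 + r}. \<omega> (seq_embedding n s q)) n = \<omega> 0"
    and "(\<lambda>q\<in>{..<n + 1 + r}. \<omega> (seq_embedding n s q)) (n + 1 + s) = \<omega> 1"
    and "c \<le> n \<Longrightarrow> map (\<lambda>q\<in>{..<n + 1 + r}. \<omega> (seq_embedding n s q)) [0..<c] = map \<omega> [2..<c + 2]"
  using assms by (auto simp: seq_embedding_def simp del: upt_Suc intro!: nth_equalityI)

context feature_predictor
begin

lemma feature_loss_truthful_Suc:
  assumes r: "1 \<le> r"
  shows "feature_loss Prior \<psi> H id c r =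
      (\<integral>\<omega>. (H c r (map \<omega> [0..<c]) (\<psi> (\<omega> (Suc c))) - H (Suc c) r (map \<omega> [0..<Suc c]) (\<psi> (\<omega> (Suc c))))\<^sup>2
        \<partial>h_space Prior (Suc c) r)
      + feature_loss Prior \<psi> H id (Suc c) r"
proof -
  define w where "w = (\<lambda>(xs, t). H c r (take c xs) t)"
  have w: "w \<in> borel_measurable (listM M \<Otimes>\<^sub>M borel)"
    using measurable_H_comp[OF r measurable_comp[OF measurable_fst measurable_take_listM] measurable_snd]
    by (simp add: w_def comp_def case_prod_beta)
  have w_bounded: "\<bar>w (xs, t)\<bar> \<le> 1" if "xs \<in> lists (space M)" "length xs = Suc c" for xs t
    using that abs_H_le_1[OF r, of "take c xs" c t] by (auto simp: w_def dest: in_set_takeD)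
  \<comment> \<open>The c-sample problem sits inside the (c + 1)-sample one, skipping sample c.\<close>
  define \<pi> where "\<pi> q = (if q < c then q else Suc q)" for q
  have \<pi>: "inj_on \<pi> {..<c + 1 + r}" "\<pi> \<in> {..<c + 1 + r} \<rightarrow> {..<Suc c + 1 + r}"
    by (auto simp: \<pi>_def inj_on_def)
  have "sq_error \<psi> H id c r (\<lambda>q\<in>{..<c + 1 + r}. \<omega> (\<pi> q))
      = (w (map \<omega> [0..<Suc c], \<psi> (\<omega> (Suc c))) - empirical_rank \<psi> (Suc c) r \<omega>)\<^sup>2" for \<omega>
  proof -
    let ?\<omega>' = "\<lambda>q\<in>{..<c + 1 + r}. \<omega> (\<pi> q)"
    have Y: "map ?\<omega>' [0..<c] = map \<omega> [0..<c]"
      by (rule map_cong) (auto simp: \<pi>_def)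
    have T: "?\<omega>' c = \<omega> (Suc c)"
      by (simp add: \<pi>_def)
    have Z: "map ?\<omega>' [c + 1..<c + 1 + r] = map \<omega> [Suc c + 1..<Suc c + 1 + r]"
      by (rule nth_equalityI) (auto simp: \<pi>_def simp del: upt_Suc)
    show ?thesis
      unfolding sq_error_def empirical_rank_def id_apply Y T Z
      by (simp add: w_def take_map del: upt_Suc)
  qed
  then have "feature_loss Prior \<psi> H id c r
      = (\<integral>\<omega>. (w (map \<omega> [0..<Suc c], \<psi> (\<omega> (Suc c))) - empirical_rank \<psi> (Suc c) r \<omega>)\<^sup>2 \<partial>h_space Prior (Suc c) r)"
    using integral_iid_mix_reindex[OF \<pi> measurable_sq_error[OF r measurable_ident]]
    by (simp add: feature_loss_def h_space_eq_iid_mix)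
  also have "\<dots> = (\<integral>\<omega>. (w (map \<omega> [0..<Suc c], \<psi> (\<omega> (Suc c))) - H (Suc c) r (map \<omega> [0..<Suc c]) (\<psi> (\<omega> (Suc c))))\<^sup>2
        \<partial>h_space Prior (Suc c) r) + feature_loss Prior \<psi> H id (Suc c) r"
    using w w_bounded by (rule feature_loss_decomposition[OF r])
  finally show ?thesis
    by (simp add: w_def take_map del: upt_Suc)
qed

lemma measurable_indicator_feature_prefix:
  assumes "B \<in> sets (borel \<Otimes>\<^sub>M listM M)" "t \<in> I" "set is \<subseteq> I"
  shows "(\<lambda>\<omega>. indicator B (\<psi> (\<omega> t), map \<omega> is) :: real) \<in> borel_measurable (PiM I (\<lambda>_. M))"
  using measurable_comp[OF measurable_Pair[OF measurable_feature_coord measurable_map_listM]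
      borel_measurable_indicator[OF assms(1)]] assms(2,3)
  by (simp add: comp_def)

lemma integral_indicator_mult_Z_le_T:
  fixes n :: nat
  assumes s: "s < r" and B: "B \<in> sets (borel \<Otimes>\<^sub>M listM M)"
  defines "V \<equiv> \<lambda>\<omega>. indicator B (\<psi> (\<omega> n), map \<omega> [0..<n]) * (if \<psi> (\<omega> (n + 1 + s)) \<le> \<psi> (\<omega> n) then 1 else 0 :: real)"
  shows "integrable (h_space Prior n r) V"
    and "(\<integral>\<omega>. V \<omega> \<partial>h_space Prior n r)
       = (\<integral>\<omega>. indicator B (\<psi> (\<omega> 0), map \<omega> [2..<n + 2]) * indicator {\<omega>. \<psi> (\<omega> 1) \<le> \<psi> (\<omega> 0)} \<omega> \<partial>seq_space Prior)"
proof -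
  let ?J = "{..<n + 1 + r}"
  have [measurable]: "(\<lambda>\<omega>. indicator B (\<psi> (\<omega> n), map \<omega> [0..<n]) :: real) \<in> borel_measurable (PiM ?J (\<lambda>_. M))"
    by (rule measurable_indicator_feature_prefix[OF B]) auto
  have [measurable]: "(\<lambda>\<omega>. \<psi> (\<omega> (n + 1 + s))) \<in> borel_measurable (PiM ?J (\<lambda>_. M))"
    using s by (intro measurable_feature_coord) simp
  have V: "V \<in> borel_measurable (PiM ?J (\<lambda>_. M))"
    unfolding V_def by measurable
  show "integrable (h_space Prior n r) V"
    unfolding h_space_eq_iid_mix by (rule integrable_iid_mix_bounded[OF V, where B = 1]) (simp add: V_def indicator_def)
  have "V (\<lambda>q\<in>?J. \<omega> (seq_embedding n s q))
      = indicator B (\<psi> (\<omega> 0), map \<omega> [2..<n + 2]) * indicator {\<omega>. \<psi> (\<omega> 1) \<le> \<psi> (\<omega> 0)} \<omega>" for \<omega>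
    unfolding V_def seq_embedding_apply(1,2)[OF s] seq_embedding_apply(3)[OF s order_refl]
    by (simp add: indicator_def)
  moreover have "(\<integral>\<omega>. V \<omega> \<partial>h_space Prior n r) = (\<integral>\<omega>. V (\<lambda>q\<in>?J. \<omega> (seq_embedding n s q)) \<partial>seq_space Prior)"
    unfolding h_space_eq_iid_mix seq_space_eq_iid_mix
    by (rule integral_iid_mix_reindex[symmetric, OF inj_seq_embedding _ V]) simp
  ultimately show "(\<integral>\<omega>. V \<omega> \<partial>h_space Prior n r)
      = (\<integral>\<omega>. indicator B (\<psi> (\<omega> 0), map \<omega> [2..<n + 2]) * indicator {\<omega>. \<psi> (\<omega> 1) \<le> \<psi> (\<omega> 0)} \<omega> \<partial>seq_space Prior)"
    by simp
qed

text \<open>Averaging over the r points of Z is harmless: by exchangeability each of them,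
  together with T and the agent's data, is distributed like (Z, T, X_1, ..., X_n).\<close>
lemma integral_indicator_mult_empirical_rank:
  assumes r: "1 \<le> r" and B: "B \<in> sets (borel \<Otimes>\<^sub>M listM M)"
  shows "(\<integral>\<omega>. indicator B (\<psi> (\<omega> n), map \<omega> [0..<n]) * empirical_rank \<psi> n r \<omega> \<partial>h_space Prior n r)
       = (\<integral>\<omega>. indicator B (\<psi> (\<omega> 0), map \<omega> [2..<n + 2]) * indicator {\<omega>. \<psi> (\<omega> 1) \<le> \<psi> (\<omega> 0)} \<omega> \<partial>seq_space Prior)"
proof -
  define V where "V \<omega> = (indicator B (\<psi> (\<omega> n), map \<omega> [0..<n]) :: real)" for \<omega> :: "nat \<Rightarrow> 'a"
  define I where "I s \<omega> = (if \<psi> (\<omega> (n + 1 + s)) \<le> \<psi> (\<omega> n) then 1 else 0 :: real)" for s \<omega>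
  note Z_le_T = integral_indicator_mult_Z_le_T[OF _ B, of _ r n, folded V_def I_def]
  have "empirical_rank \<psi> n r \<omega> = (\<Sum>s<r. I s \<omega>) / real r" for \<omega>
    using ecdf_map_upt[of "\<lambda>q. \<psi> (\<omega> q)" "n + 1" r "\<psi> (\<omega> n)"]
    by (simp add: empirical_rank_def I_def map_map comp_def)
  then have "(\<integral>\<omega>. V \<omega> * empirical_rank \<psi> n r \<omega> \<partial>h_space Prior n r)
      = (\<integral>\<omega>. (\<Sum>s<r. V \<omega> * I s \<omega>) / real r \<partial>h_space Prior n r)"
    by (simp add: sum_distrib_left)
  also have "\<dots> = (\<Sum>s<r. (\<integral>\<omega>. V \<omega> * I s \<omega> \<partial>h_space Prior n r)) / real r"
    using Z_le_T(1) by simp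
  also have "\<dots> = (\<integral>\<omega>. indicator B (\<psi> (\<omega> 0), map \<omega> [2..<n + 2]) * indicator {\<omega>. \<psi> (\<omega> 1) \<le> \<psi> (\<omega> 0)} \<omega> \<partial>seq_space Prior)"
    using Z_le_T(2) r by simp
  finally show ?thesis unfolding V_def .
qed

lemma integral_indicator_mult_H:
  assumes r: "1 \<le> r" and B: "B \<in> sets (borel \<Otimes>\<^sub>M listM M)"
  shows "(\<integral>\<omega>. indicator B (\<psi> (\<omega> 0), map \<omega> [2..<n + 2]) * indicator {\<omega>. \<psi> (\<omega> 1) \<le> \<psi> (\<omega> 0)} \<omega> \<partial>seq_space Prior)
       = (\<integral>\<omega>. indicator B (\<psi> (\<omega> 0), map \<omega> [2..<n + 2]) * H n r (map \<omega> [2..<n + 2]) (\<psi> (\<omega> 0)) \<partial>seq_space Prior)"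
proof -
  let ?N = "h_space Prior n r" and ?J = "{..<n + 1 + r}"
  let ?F = "vimage_algebra (space ?N) (\<lambda>\<omega>. (map \<omega> [0..<n], \<psi> (\<omega> n))) (listM M \<Otimes>\<^sub>M borel)"
  interpret finite_measure_subalgebra ?N ?F
    by (rule finite_measure_subalgebra_observation)
  have s0: "0 < r" using r by simp
  define V where "V \<omega> = (indicator B (\<psi> (\<omega> n), map \<omega> [0..<n]) :: real)" for \<omega> :: "nat \<Rightarrow> 'a"
  define u where "u \<omega> = H n r (map \<omega> [0..<n]) (\<psi> (\<omega> n))" for \<omega>
  have V: "V \<in> borel_measurable (PiM ?J (\<lambda>_. M))"
    unfolding V_def by (rule measurable_indicator_feature_prefix[OF B]) auto
  have u: "u \<in> borel_measurable (PiM ?J (\<lambda>_. M))"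
    unfolding u_def by (intro measurable_H_comp[OF r] measurable_map_listM measurable_feature_coord) auto
  have V_F: "V \<in> borel_measurable ?F"
    unfolding V_def[abs_def] using measurable_observation_vimage[OF measurable_comp[OF measurable_pair_swap' borel_measurable_indicator[OF B]]]
    by (simp add: comp_def)
  have "(\<integral>\<omega>. indicator B (\<psi> (\<omega> 0), map \<omega> [2..<n + 2]) * H n r (map \<omega> [2..<n + 2]) (\<psi> (\<omega> 0)) \<partial>seq_space Prior)
      = (\<integral>\<omega>. V (\<lambda>q\<in>?J. \<omega> (seq_embedding n 0 q)) * u (\<lambda>q\<in>?J. \<omega> (seq_embedding n 0 q)) \<partial>seq_space Prior)"
    unfolding V_def u_def seq_embedding_apply(1)[OF s0] seq_embedding_apply(3)[OF s0 order_refl] ..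
  also have "\<dots> = (\<integral>\<omega>. V \<omega> * u \<omega> \<partial>?N)"
    unfolding h_space_eq_iid_mix seq_space_eq_iid_mix
    by (rule integral_iid_mix_reindex[OF inj_seq_embedding _ borel_measurable_times[OF V u]]) simp
  also have "\<dots> = (\<integral>\<omega>. V \<omega> * empirical_rank \<psi> n r \<omega> \<partial>?N)"
  proof (rule integral_mult_cond_exp[OF H_cond_exp[OF r, of n, folded u_def] _ _ V_F])
    show "u \<in> borel_measurable ?N" "empirical_rank \<psi> n r \<in> borel_measurable ?N"
      using u measurable_empirical_rank by (auto intro: measurable_h_space)
    show "integrable ?N (\<lambda>\<omega>. V \<omega> * empirical_rank \<psi> n r \<omega>)"
      unfolding h_space_eq_iid_mix
      using abs_empirical_rank_le_1[of \<psi> n r] V_def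
      by (intro integrable_iid_mix_bounded[where B = 1] borel_measurable_times V measurable_empirical_rank)
         (simp add: abs_mult indicator_def)
  qed
  also have "\<dots> = (\<integral>\<omega>. indicator B (\<psi> (\<omega> 0), map \<omega> [2..<n + 2]) * indicator {\<omega>. \<psi> (\<omega> 1) \<le> \<psi> (\<omega> 0)} \<omega> \<partial>seq_space Prior)"
    unfolding V_def by (rule integral_indicator_mult_empirical_rank[OF r B])
  finally show ?thesis ..
qed

lemma measurable_seq_observation:
  "(\<lambda>\<omega>. (\<psi> (\<omega> 0), map \<omega> [2..<n + 2])) \<in> seq_space Prior \<rightarrow>\<^sub>M borel \<Otimes>\<^sub>M listM M"
  unfolding seq_space_eq_iid_mix
  by (intro measurable_iid_mix measurable_Pair measurable_map_listM measurable_feature_coord) auto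

lemma finite_measure_subalgebra_cond_sigma:
  "finite_measure_subalgebra (seq_space Prior) (cond_sigma M Prior \<psi> n)"
  unfolding cond_sigma_def
proof (rule finite_measure_subalgebra_vimage[OF _ measurable_seq_observation])
  show "finite_measure (seq_space Prior)"
    unfolding seq_space_eq_iid_mix using prob_space_iid_mix by (rule prob_space.finite_measure)
qed

lemma measurable_cond_sigma:
  assumes "f \<in> borel_measurable (borel \<Otimes>\<^sub>M listM M)"
  shows "(\<lambda>\<omega>. f (\<psi> (\<omega> 0), map \<omega> [2..<n + 2])) \<in> borel_measurable (cond_sigma M Prior \<psi> n)"
proof -
  have "(\<lambda>\<omega>. (\<psi> (\<omega> 0), map \<omega> [2..<n + 2])) \<in> cond_sigma M Prior \<psi> n \<rightarrow>\<^sub>M borel \<Otimes>\<^sub>M listM M"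
    unfolding cond_sigma_def using measurable_space[OF measurable_seq_observation]
    by (intro measurable_vimage_algebra1) blast
  from measurable_comp[OF this assms] show ?thesis by (simp add: comp_def)
qed

lemma cond_exp_seq_space_eq_H:
  assumes r: "1 \<le> r"
  shows "AE \<omega> in seq_space Prior.
    real_cond_exp (seq_space Prior) (cond_sigma M Prior \<psi> n) (indicator {\<omega>. \<psi> (\<omega> 1) \<le> \<psi> (\<omega> 0)}) \<omega>
      = H n r (map \<omega> [2..<n + 2]) (\<psi> (\<omega> 0))"
proof -
  let ?\<Omega> = "seq_space Prior" and ?G = "cond_sigma M Prior \<psi> n"
  let ?obs = "\<lambda>\<omega>. (\<psi> (\<omega> 0), map \<omega> [2..<n + 2])"
  interpret finite_measure_subalgebra ?\<Omega> ?G
    by (rule finite_measure_subalgebra_cond_sigma)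
  have H_G: "(\<lambda>\<omega>. H n r (map \<omega> [2..<n + 2]) (\<psi> (\<omega> 0))) \<in> borel_measurable ?G"
    using measurable_cond_sigma[OF measurable_comp[OF measurable_pair_swap' measurable_H[OF r]]]
    by (simp add: comp_def)
  show ?thesis
  proof (rule real_cond_exp_charact)
    fix A assume "A \<in> sets ?G"
    then obtain B where B: "B \<in> sets (borel \<Otimes>\<^sub>M listM M)" and A: "A = ?obs -` B \<inter> space ?\<Omega>"
      using measurable_space[OF measurable_seq_observation]
      unfolding cond_sigma_def seq_space_eq_iid_mix[symmetric] by (subst (asm) sets_vimage_algebra2) blast+
    have "indicator A \<omega> = (indicator B (?obs \<omega>) :: real)" if "\<omega> \<in> space ?\<Omega>" for \<omega>
      using that by (simp add: A indicator_def)
    then show "(\<integral>\<omega>\<in>A. indicator {\<omega>. \<psi> (\<omega> 1) \<le> \<psi> (\<omega> 0)} \<omega> \<partial>?\<Omega>)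
        = (\<integral>\<omega>\<in>A. H n r (map \<omega> [2..<n + 2]) (\<psi> (\<omega> 0)) \<partial>?\<Omega>)"
      using integral_indicator_mult_H[OF r B, of n]
      unfolding set_lebesgue_integral_def by (simp cong: Bochner_Integration.integral_cong)
  next
    have [measurable]: "(\<lambda>\<omega>. \<psi> (\<omega> 0)) \<in> borel_measurable (PiM UNIV (\<lambda>_. M))"
      "(\<lambda>\<omega>. \<psi> (\<omega> 1)) \<in> borel_measurable (PiM UNIV (\<lambda>_. M))"
      by (rule measurable_feature_coord, simp)+
    have ind_eq: "indicator {\<omega>. \<psi> (\<omega> 1) \<le> \<psi> (\<omega> 0)} = (\<lambda>\<omega>. if \<psi> (\<omega> 1) \<le> \<psi> (\<omega> 0) then 1 else 0 :: real)"
      by (simp add: fun_eq_iff indicator_def)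
    show "integrable ?\<Omega> (indicator {\<omega>. \<psi> (\<omega> 1) \<le> \<psi> (\<omega> 0)} :: _ \<Rightarrow> real)"
      unfolding seq_space_eq_iid_mix
    proof (rule integrable_iid_mix_bounded[where B = 1])
      show "(indicator {\<omega>. \<psi> (\<omega> 1) \<le> \<psi> (\<omega> 0)} :: _ \<Rightarrow> real) \<in> borel_measurable (PiM UNIV (\<lambda>_. M))"
        unfolding ind_eq by measurable
    qed (simp add: indicator_def)
    have "map \<omega> [2..<n + 2] \<in> lists (space M)" if "\<omega> \<in> space ?\<Omega>" for \<omega>
      using that by (intro map_in_lists_PiM) (auto simp: seq_space_eq_iid_mix space_iid_mix)
    then show "integrable ?\<Omega> (\<lambda>\<omega>. H n r (map \<omega> [2..<n + 2]) (\<psi> (\<omega> 0)))"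
      using measurable_from_subalg[OF subalg H_G] abs_H_le_1[OF r]
      by (intro integrable_const_bound[where B = 1] AE_I2) auto
  qed (rule H_G)
qed

lemma integrable_H_Suc_diff_sq:
  assumes r: "1 \<le> r"
  shows "integrable (h_space Prior (Suc c) r) (\<lambda>\<omega>. (H c r (map \<omega> [0..<c]) (\<psi> (\<omega> (Suc c))) - H (Suc c) r (map \<omega> [0..<Suc c]) (\<psi> (\<omega> (Suc c))))\<^sup>2)"
    (is "integrable _ (\<lambda>\<omega>. (?W \<omega> - ?U \<omega>)\<^sup>2)")
  unfolding h_space_eq_iid_mix
proof (rule integrable_iid_mix_bounded[where B = 4])
  show "(\<lambda>\<omega>. (?W \<omega> - ?U \<omega>)\<^sup>2) \<in> borel_measurable (PiM {..<Suc c + 1 + r} (\<lambda>_. M))"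
    by (intro borel_measurable_power borel_measurable_diff measurable_H_comp[OF r]
        measurable_map_listM measurable_feature_coord) auto
next
  fix \<omega> assume \<omega>: "\<omega> \<in> space (PiM {..<Suc c + 1 + r} (\<lambda>_. M))"
  have "map \<omega> [0..<c] \<in> lists (space M)"
    using \<omega> by (rule map_in_lists_PiM) auto
  moreover have "map \<omega> [0..<Suc c] \<in> lists (space M)"
    using \<omega> by (rule map_in_lists_PiM) auto
  ultimately have "\<bar>?W \<omega>\<bar> \<le> 1" "\<bar>?U \<omega>\<bar> \<le> 1"
    using abs_H_le_1[OF r] by auto
  then have "\<bar>?W \<omega> - ?U \<omega>\<bar> \<le> 2"
    using abs_triangle_ineq4[of "?W \<omega>" "?U \<omega>"] by linarith
  then have "\<bar>?W \<omega> - ?U \<omega>\<bar>\<^sup>2 \<le> 2\<^sup>2" by (intro power_mono) auto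
  then show "\<bar>(?W \<omega> - ?U \<omega>)\<^sup>2\<bar> \<le> 4" by simp
qed

lemma degenerate_if_H_Suc_eq:
  assumes r: "1 \<le> r"
    and eq: "AE \<omega> in h_space Prior (Suc c) r. H c r (map \<omega> [0..<c]) (\<psi> (\<omega> (Suc c))) = H (Suc c) r (map \<omega> [0..<Suc c]) (\<psi> (\<omega> (Suc c)))"
  shows "degenerate M Prior \<psi>"
proof -
  let ?J = "{..<Suc c + 1 + r}"
  have s0: "0 < r" using r by simp
  from eq have "AE \<omega> in seq_space Prior.
      H c r (map (\<lambda>q\<in>?J. \<omega> (seq_embedding (Suc c) 0 q)) [0..<c]) (\<psi> ((\<lambda>q\<in>?J. \<omega> (seq_embedding (Suc c) 0 q)) (Suc c)))
      = H (Suc c) r (map (\<lambda>q\<in>?J. \<omega> (seq_embedding (Suc c) 0 q)) [0..<Suc c]) (\<psi> ((\<lambda>q\<in>?J. \<omega> (seq_embedding (Suc c) 0 q)) (Suc c)))"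
    unfolding h_space_eq_iid_mix seq_space_eq_iid_mix
    by (rule AE_iid_mix_reindex[OF inj_seq_embedding, rotated]) simp
  then have "AE \<omega> in seq_space Prior.
      H c r (map \<omega> [2..<c + 2]) (\<psi> (\<omega> 0)) = H (Suc c) r (map \<omega> [2..<Suc c + 2]) (\<psi> (\<omega> 0))"
    unfolding seq_embedding_apply(1)[OF s0] seq_embedding_apply(3)[OF s0 le_SucI[OF order_refl]]
      seq_embedding_apply(3)[OF s0 order_refl] .
  with cond_exp_seq_space_eq_H[OF r, of c] cond_exp_seq_space_eq_H[OF r, of "Suc c"]
  show ?thesis
    unfolding degenerate_def by (intro exI[of _ c]) (auto elim: AE_mp)
qed

lemma integral_H_Suc_diff_pos:
  assumes r: "1 \<le> r" and nondegenerate: "\<not> degenerate M Prior \<psi>"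
  shows "0 < (\<integral>\<omega>. (H c r (map \<omega> [0..<c]) (\<psi> (\<omega> (Suc c))) - H (Suc c) r (map \<omega> [0..<Suc c]) (\<psi> (\<omega> (Suc c))))\<^sup>2 \<partial>h_space Prior (Suc c) r)"
    (is "0 < ?gap")
proof (rule ccontr)
  assume "\<not> 0 < ?gap"
  moreover have "0 \<le> ?gap" by (rule integral_nonneg_AE) simp
  ultimately have "?gap = 0" by linarith
  then have "AE \<omega> in h_space Prior (Suc c) r. H c r (map \<omega> [0..<c]) (\<psi> (\<omega> (Suc c))) = H (Suc c) r (map \<omega> [0..<Suc c]) (\<psi> (\<omega> (Suc c)))"
    using integrable_H_Suc_diff_sq[OF r] by (subst (asm) integral_nonneg_eq_0_iff_AE) auto
  with nondegenerate degenerate_if_H_Suc_eq[OF r] show False by blast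
qed

lemma feature_loss_truthful_Suc_le:
  "1 \<le> r \<Longrightarrow> feature_loss Prior \<psi> H id (Suc c) r \<le> feature_loss Prior \<psi> H id c r"
  using feature_loss_truthful_Suc[of r c] by (simp add: integral_nonneg_AE)

lemma feature_loss_truthful_Suc_less:
  "1 \<le> r \<Longrightarrow> \<not> degenerate M Prior \<psi> \<Longrightarrow> feature_loss Prior \<psi> H id (Suc c) r < feature_loss Prior \<psi> H id c r"
  using feature_loss_truthful_Suc[of r c] integral_H_Suc_diff_pos[of r c] by simp

end

section \<open>Reduction of the mechanism to single features\<close>

lemma map_restrict_nth_upt:
  assumes "b \<le> length L"
  shows "map (\<lambda>q\<in>{..<length L}. \<omega> (L ! q)) [a..<b] = map \<omega> (take (b - a) (drop a L))"
  using assms by (intro nth_equalityI) auto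

lemma sq_error_restrict_append:
  assumes "L = ys @ t # zs"
  shows "sq_error \<psi> H g (length ys) (length zs) (\<lambda>q\<in>{..<length L}. \<omega> (L ! q))
    = (H (length (g (map \<omega> ys))) (length zs) (g (map \<omega> ys)) (\<psi> (\<omega> t)) - ecdf (map \<psi> (map \<omega> zs)) (\<psi> (\<omega> t)))\<^sup>2"
proof -
  let ?\<omega>' = "\<lambda>q\<in>{..<length L}. \<omega> (L ! q)"
  have len: "length L = length ys + 1 + length zs" using assms by simp
  have "map ?\<omega>' [0..<length ys] = map \<omega> (take (length ys - 0) (drop 0 L))"
    by (rule map_restrict_nth_upt) (simp add: len)
  then have Y: "map ?\<omega>' [0..<length ys] = map \<omega> ys" by (simp add: assms)
  have T: "?\<omega>' (length ys) = \<omega> t" by (simp add: assms)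
  have "map ?\<omega>' [length ys + 1..<length ys + 1 + length zs]
      = map \<omega> (take (length ys + 1 + length zs - (length ys + 1)) (drop (length ys + 1) L))"
    by (rule map_restrict_nth_upt) (simp add: len)
  then have Z: "map ?\<omega>' [length ys + 1..<length ys + 1 + length zs] = map \<omega> zs" by (simp add: assms)
  show ?thesis unfolding sq_error_def empirical_rank_def Y T Z ..
qed

lemma remove_nth_map: "remove_nth p (map f xs) = map f (remove_nth p xs)"
  unfolding remove_nth_def by (simp add: take_map drop_map)

lemma length_remove_nth: "p < length xs \<Longrightarrow> length (remove_nth p xs) = length xs - 1"
  unfolding remove_nth_def by simp

lemma distinct_nth_remove_nth:
  assumes "distinct xs" "p < length xs"
  shows "distinct (xs ! p # remove_nth p xs)"
proof -
  have "distinct (take p xs @ xs ! p # drop (Suc p) xs)"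
    using assms by (simp flip: id_take_nth_drop)
  then show ?thesis unfolding remove_nth_def by auto
qed

lemma set_remove_nth_subset: "set (remove_nth p xs) \<subseteq> set xs"
  unfolding remove_nth_def by (auto dest: in_set_takeD in_set_dropD)

definition others_index :: "nat \<Rightarrow> (nat \<Rightarrow> nat) \<Rightarrow> nat \<Rightarrow> (nat \<times> nat) list" where
  "others_index m n i = concat (map (\<lambda>j. map (\<lambda>l. (j, l)) [0..<n j]) (filter (\<lambda>j. j \<noteq> i) [0..<m]))"

lemma others_sub_unilateral: "others_sub m ((\<lambda>_. id)(i := g)) n i \<omega> = map \<omega> (others_index m n i)"
proof -
  have "others_sub m ((\<lambda>_. id)(i := g)) n i \<omega>
      = concat (map (\<lambda>j. map \<omega> (map (\<lambda>l. (j, l)) [0..<n j])) (filter (\<lambda>j. j \<noteq> i) [0..<m]))"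
    unfolding others_sub_def agent_data_def
    by (intro arg_cong[where f = concat] map_cong refl) (simp add: comp_def)
  then show ?thesis
    unfolding others_index_def by (simp add: map_concat comp_def)
qed

lemma length_others_index: "length (others_index m n i) = (\<Sum>j\<in>{..<m} - {i}. n j)"
proof -
  have "{..<m} - {i} = set (filter (\<lambda>j. j \<noteq> i) [0..<m])" by auto
  then show ?thesis
    unfolding others_index_def length_concat by (simp add: comp_def sum_list_distinct_conv_sum_set)
qed

lemma distinct_others_index: "distinct (others_index m n i)"
proof -
  have "distinct (concat (map (\<lambda>j. map (\<lambda>l. (j, l)) (xs j)) js))"
    if "distinct js" "\<And>j. distinct (xs j)" for js and xs :: "nat \<Rightarrow> nat list"
    using that by (induction js) (auto simp: distinct_map inj_on_def)
  then show ?thesis unfolding others_index_def by simp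
qed

lemma set_others_index: "set (others_index m n i) = {(j, l). j < m \<and> j \<noteq> i \<and> l < n j}"
  unfolding others_index_def by auto

text \<open>The coordinates read by agent i's loss when T is the p-th pooled point of the others,
  in the order of h_space: agent i's data, then T, then Z.\<close>
definition loss_layout :: "nat \<Rightarrow> (nat \<Rightarrow> nat) \<Rightarrow> nat \<Rightarrow> nat \<Rightarrow> (nat \<times> nat) list" where
  "loss_layout m n i p =
     map (\<lambda>l. (i, l)) [0..<n i] @ others_index m n i ! p # remove_nth p (others_index m n i)"

lemma distinct_loss_layout: "p < length (others_index m n i) \<Longrightarrow> distinct (loss_layout m n i p)"
  using distinct_nth_remove_nth[OF distinct_others_index] set_remove_nth_subset[of p "others_index m n i"]
    nth_mem[of p "others_index m n i"]
  by (fastforce simp: loss_layout_def distinct_map inj_on_def set_others_index)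

lemma set_loss_layout:
  "p < length (others_index m n i) \<Longrightarrow> i < m \<Longrightarrow> set (loss_layout m n i p) \<subseteq> {(j, l). j < m \<and> l < n j}"
  using set_remove_nth_subset[of p "others_index m n i"] nth_mem[of p "others_index m n i"]
  by (auto simp: loss_layout_def set_others_index)

locale mechanism = iid_mixture +
  fixes K :: nat and \<phi> :: "nat \<Rightarrow> 'a \<Rightarrow> real" and h :: "nat \<Rightarrow> nat \<Rightarrow> nat \<Rightarrow> 'a list \<Rightarrow> real \<Rightarrow> real"
  assumes feature_predictor: "k < K \<Longrightarrow> feature_predictor M Prior (\<phi> k) (h k)"
begin

lemma mech_loss_unilateral:
  assumes N: "length (others_index m n i) = N"
  shows "mech_loss K \<phi> h (g (agent_data n i \<omega>)) (others_sub m ((\<lambda>_. id)(i := g)) n i \<omega>)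
    = (1 / real N) * (\<Sum>p<N. (1 / real K) * (\<Sum>k<K.
        sq_error (\<phi> k) (h k) g (n i) (N - 1)
          (\<lambda>q\<in>{..<length (loss_layout m n i p)}. \<omega> (loss_layout m n i p ! q))))"
proof -
  have "sq_error (\<phi> k) (h k) g (n i) (N - 1) (\<lambda>q\<in>{..<length (loss_layout m n i p)}. \<omega> (loss_layout m n i p ! q))
      = (h k (length (g (agent_data n i \<omega>))) (N - 1) (g (agent_data n i \<omega>)) (\<phi> k (map \<omega> (others_index m n i) ! p))
         - ecdf (map (\<phi> k) (remove_nth p (map \<omega> (others_index m n i)))) (\<phi> k (map \<omega> (others_index m n i) ! p)))\<^sup>2"
    if p: "p < N" for p k
    using sq_error_restrict_append[OF loss_layout_def[of m n i p], of "\<phi> k" "h k" g \<omega>] N p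
    by (simp add: length_remove_nth remove_nth_map agent_data_def comp_def)
  then show ?thesis
    unfolding mech_loss_def others_sub_unilateral N[symmetric] by simp
qed

lemma integral_loss_layout:
  assumes i: "i < m" and N: "length (others_index m n i) = N" "2 \<le> N" and p: "p < N" and k: "k < K"
    and g: "g \<in> listM M \<rightarrow>\<^sub>M listM M"
  defines "L \<equiv> loss_layout m n i p"
  shows "integrable (iid_mix {(j, l). j < m \<and> l < n j})
      (\<lambda>\<omega>. sq_error (\<phi> k) (h k) g (n i) (N - 1) (\<lambda>q\<in>{..<length L}. \<omega> (L ! q)))"
    and "(\<integral>\<omega>. sq_error (\<phi> k) (h k) g (n i) (N - 1) (\<lambda>q\<in>{..<length L}. \<omega> (L ! q)) \<partial>iid_mix {(j, l). j < m \<and> l < n j})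
      = feature_loss Prior (\<phi> k) (h k) g (n i) (N - 1)"
proof -
  let ?I = "{(j, l). j < m \<and> l < n j}"
  interpret feature_predictor M Prior "\<phi> k" "h k" by (rule feature_predictor[OF k])
  have r: "1 \<le> N - 1" using N by simp
  have L: "distinct L" "set L \<subseteq> ?I" "length L = n i + 1 + (N - 1)"
    using distinct_loss_layout set_loss_layout i p N by (auto simp: L_def loss_layout_def length_remove_nth)
  have reindex: "(\<lambda>\<omega>. \<lambda>q\<in>{..<length L}. \<omega> (L ! q)) \<in> PiM ?I (\<lambda>_. M) \<rightarrow>\<^sub>M PiM {..<length L} (\<lambda>_. M)"
    by (intro measurable_reindex_PiM Pi_I subsetD[OF L(2)] nth_mem) simp
  have G: "sq_error (\<phi> k) (h k) g (n i) (N - 1) \<in> borel_measurable (PiM {..<length L} (\<lambda>_. M))"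
    using measurable_sq_error[OF r g] L(3) by simp
  show "integrable (iid_mix ?I) (\<lambda>\<omega>. sq_error (\<phi> k) (h k) g (n i) (N - 1) (\<lambda>q\<in>{..<length L}. \<omega> (L ! q)))"
  proof (rule integrable_iid_mix_bounded[where B = 4])
    show "(\<lambda>\<omega>. sq_error (\<phi> k) (h k) g (n i) (N - 1) (\<lambda>q\<in>{..<length L}. \<omega> (L ! q)))
        \<in> borel_measurable (PiM ?I (\<lambda>_. M))"
      using measurable_comp[OF reindex G] by (simp add: comp_def)
  next
    fix \<omega> assume "\<omega> \<in> space (PiM ?I (\<lambda>_. M))"
    from measurable_space[OF reindex this]
    show "\<bar>sq_error (\<phi> k) (h k) g (n i) (N - 1) (\<lambda>q\<in>{..<length L}. \<omega> (L ! q))\<bar> \<le> 4"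
      using abs_sq_error_le_4[OF r g] L(3) by simp
  qed
  have "(\<integral>\<omega>. sq_error (\<phi> k) (h k) g (n i) (N - 1) (\<lambda>q\<in>{..<length L}. \<omega> (L ! q)) \<partial>iid_mix ?I)
      = (\<integral>\<omega>. sq_error (\<phi> k) (h k) g (n i) (N - 1) \<omega> \<partial>iid_mix {..<length L})"
    by (rule integral_iid_mix_list[OF L(1,2) G])
  also have "\<dots> = feature_loss Prior (\<phi> k) (h k) g (n i) (N - 1)"
    unfolding feature_loss_def h_space_eq_iid_mix L(3) ..
  finally show "(\<integral>\<omega>. sq_error (\<phi> k) (h k) g (n i) (N - 1) (\<lambda>q\<in>{..<length L}. \<omega> (L ! q)) \<partial>iid_mix ?I)
      = feature_loss Prior (\<phi> k) (h k) g (n i) (N - 1)" .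
qed

lemma expected_loss_unilateral:
  assumes i: "i < m" and N: "(\<Sum>j\<in>{..<m} - {i}. n j) = N" "2 \<le> N" and g: "g \<in> listM M \<rightarrow>\<^sub>M listM M"
  shows "expected_loss Prior K \<phi> h m ((\<lambda>_. id)(i := g)) n i
    = (1 / real K) * (\<Sum>k<K. feature_loss Prior (\<phi> k) (h k) g (n i) (N - 1))"
proof -
  let ?I = "{(j, l). j < m \<and> l < n j}" and ?L = "loss_layout m n i"
  define f where "f p k \<omega> = sq_error (\<phi> k) (h k) g (n i) (N - 1) (\<lambda>q\<in>{..<length (?L p)}. \<omega> (?L p ! q))"
    for p k \<omega>
  have len: "length (others_index m n i) = N" using N by (simp add: length_others_index)
  note f = integral_loss_layout[OF i len N(2) _ _ g, folded f_def]
  have "expected_loss Prior K \<phi> h m ((\<lambda>_. id)(i := g)) n i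
      = (\<integral>\<omega>. (1 / real N) * (\<Sum>p<N. (1 / real K) * (\<Sum>k<K. f p k \<omega>)) \<partial>iid_mix ?I)"
    unfolding expected_loss_def data_measure_eq_iid_mix f_def
    using mech_loss_unilateral[OF len] by simp
  also have "\<dots> = (1 / real N) * (\<Sum>p<N. (1 / real K) * (\<Sum>k<K. \<integral>\<omega>. f p k \<omega> \<partial>iid_mix ?I))"
  proof -
    have "\<And>p. p \<in> {..<N} \<Longrightarrow> integrable (iid_mix ?I) (\<lambda>\<omega>. (1 / real K) * (\<Sum>k<K. f p k \<omega>))"
      using f(1) by (intro integrable_mult_right Bochner_Integration.integrable_sum) auto
    with f(1) show ?thesis
      by (simp add: integral_mult_right_zero Bochner_Integration.integral_sum)
  qed
  also have "\<dots> = (1 / real K) * (\<Sum>k<K. feature_loss Prior (\<phi> k) (h k) g (n i) (N - 1))"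
    using f(2) N by simp
  finally show ?thesis .
qed

lemma expected_loss_truthful:
  assumes "i < m" "(\<Sum>j\<in>{..<m} - {i}. n j) = N" "2 \<le> N"
  shows "expected_loss Prior K \<phi> h m (\<lambda>_. id) n i
    = (1 / real K) * (\<Sum>k<K. feature_loss Prior (\<phi> k) (h k) id (n i) (N - 1))"
proof -
  have "(\<lambda>_. id)(i := id) = (\<lambda>_. id :: 'a list \<Rightarrow> 'a list)" by auto
  then show ?thesis using expected_loss_unilateral[OF assms measurable_ident] by simp
qed

lemma expected_loss_truthful_le:
  assumes i: "i < m" and N: "2 \<le> (\<Sum>j\<in>{..<m} - {i}. n j)" and f: "f \<in> listM M \<rightarrow>\<^sub>M listM M"
  shows "expected_loss Prior K \<phi> h m (\<lambda>_. id) n i \<le> expected_loss Prior K \<phi> h m ((\<lambda>_. id)(i := f)) n i"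
proof -
  have "1 \<le> (\<Sum>j\<in>{..<m} - {i}. n j) - 1" using N by simp
  then have "(\<Sum>k<K. feature_loss Prior (\<phi> k) (h k) id (n i) ((\<Sum>j\<in>{..<m} - {i}. n j) - 1))
      \<le> (\<Sum>k<K. feature_loss Prior (\<phi> k) (h k) f (n i) ((\<Sum>j\<in>{..<m} - {i}. n j) - 1))"
    using feature_predictor.feature_loss_truthful_le[OF feature_predictor _ f] by (intro sum_mono) blast
  then show ?thesis
    using expected_loss_truthful[OF i refl N] expected_loss_unilateral[OF i refl N f]
    by (simp add: divide_right_mono)
qed

lemma expected_loss_truthful_strict_decreasing:
  assumes nondegenerate: "\<exists>k<K. \<not> degenerate M Prior (\<phi> k)"
    and i: "i < m" and N: "2 \<le> (\<Sum>j\<in>{..<m} - {i}. n j)" and "a < b"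
  shows "expected_loss Prior K \<phi> h m (\<lambda>_. id) (n(i := b)) i < expected_loss Prior K \<phi> h m (\<lambda>_. id) (n(i := a)) i"
proof -
  define N where "N = (\<Sum>j\<in>{..<m} - {i}. n j)"
  define E where "E c = (1 / real K) * (\<Sum>k<K. feature_loss Prior (\<phi> k) (h k) id c (N - 1))" for c
  have "(\<Sum>j\<in>{..<m} - {i}. (n(i := c)) j) = N" for c unfolding N_def by (intro sum.cong) auto
  then have E: "expected_loss Prior K \<phi> h m (\<lambda>_. id) (n(i := c)) i = E c" for c
    using expected_loss_truthful[OF i] N by (simp add: E_def N_def)
  have r: "1 \<le> N - 1" using N by (simp add: N_def)
  obtain k0 where k0: "k0 < K" "\<not> degenerate M Prior (\<phi> k0)" using nondegenerate by blast
  have "E (Suc c) < E c" for c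
  proof -
    have "(\<Sum>k<K. feature_loss Prior (\<phi> k) (h k) id (Suc c) (N - 1)) < (\<Sum>k<K. feature_loss Prior (\<phi> k) (h k) id c (N - 1))"
    proof (rule sum_strict_mono_ex1)
      show "\<forall>k\<in>{..<K}. feature_loss Prior (\<phi> k) (h k) id (Suc c) (N - 1) \<le> feature_loss Prior (\<phi> k) (h k) id c (N - 1)"
        using feature_predictor.feature_loss_truthful_Suc_le[OF feature_predictor r] by blast
      show "\<exists>k\<in>{..<K}. feature_loss Prior (\<phi> k) (h k) id (Suc c) (N - 1) < feature_loss Prior (\<phi> k) (h k) id c (N - 1)"
        using feature_predictor.feature_loss_truthful_Suc_less[OF feature_predictor[OF k0(1)] r k0(2)] k0(1) by blast
    qed simp
    then show ?thesis unfolding E_def using k0(1) by (simp add: divide_strict_right_mono)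
  qed
  then have "E b < E a"
    using lift_Suc_mono_less[of "\<lambda>c. - E c" a b] \<open>a < b\<close> by simp
  then show ?thesis unfolding E .
qed

end

theorem theorem2:
  fixes M :: "'a measure" and Prior :: "'a measure measure" and K m :: nat
    and \<phi> :: "nat \<Rightarrow> 'a \<Rightarrow> real"
    and h :: "nat \<Rightarrow> nat \<Rightarrow> nat \<Rightarrow> 'a list \<Rightarrow> real \<Rightarrow> real"
  assumes prior: "Prior \<in> space (prob_algebra (prob_algebra M))"
    and agents: "2 \<le> m"
    and features: "\<forall>k<K. \<phi> k \<in> borel_measurable M"
    and hyp_h: "valid_h M Prior K \<phi> h"
  shows "(\<forall>n i f. i < m \<longrightarrow> 2 \<le> (\<Sum>j\<in>{..<m} - {i}. n j) \<longrightarrow>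
            f \<in> listM M \<rightarrow>\<^sub>M listM M \<longrightarrow>
            expected_loss Prior K \<phi> h m (\<lambda>_. id) n i
              \<le> expected_loss Prior K \<phi> h m ((\<lambda>_. id)(i := f)) n i)
       \<and> ((\<exists>k<K. \<not> degenerate M Prior (\<phi> k)) \<longrightarrow>
          (\<forall>n i a b. i < m \<longrightarrow> 2 \<le> (\<Sum>j\<in>{..<m} - {i}. n j) \<longrightarrow> a < b \<longrightarrow>
            expected_loss Prior K \<phi> h m (\<lambda>_. id) (n(i := b)) i
              < expected_loss Prior K \<phi> h m (\<lambda>_. id) (n(i := a)) i))"
proof -
  interpret iid_mixture M Prior by (rule iid_mixture.intro[OF prior])
  have "feature_predictor M Prior (\<phi> k) (h k)" if "k < K" for k
    using features that by (intro feature_predictor_if_valid_h[OF hyp_h]) auto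
  then interpret mechanism M Prior K \<phi> h
    by (simp add: mechanism_def mechanism_axioms_def iid_mixture_axioms)
  show ?thesis
    by (intro conjI allI impI expected_loss_truthful_le expected_loss_truthful_strict_decreasing; assumption)
qed

end
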